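(* For all integers $n\ge0$, $\overline{bt}(16n)\equiv\overline{bt}(8n)\pmod{64}$; consequently, for all $n,\alpha\ge 0$, $\overline{bt}(2^{\alpha+3}n)\equiv \overline{bt}(8n)\pmod{64}$.
   Context: For $|q|<1$ and a positive integer $k$ let $f_k:=\prod_{m=1}^\infty(1-q^{mk})$. The function $\overline{bt}(n)$ is defined by $\sum_{n\ge0}\overline{bt}(n)q^n=\frac{f_4^3}{f_1^6f_2^3}$. *)

theory Defs
  imports "HOL-Computational_Algebra.Formal_Power_Series"
begin

text \<open>The q-Pochhammer-type product f_k = prod_{m>=1} (1 - q^(mk)) as a formal power series.
  Its n-th coefficient agrees with that of the finite product over 1 <= m <= n (k >= 1),
  since the remaining factors are 1 + O(q^(n+1)).\<close>
definition fk :: "nat \<Rightarrow> rat fps" where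
  "fk k = Abs_fps (\<lambda>n. fps_nth (\<Prod>m\<in>{1..n}. (1 - fps_X ^ (m * k))) n)"

definition btbar_gf :: "rat fps" where
  "btbar_gf = fk 4 ^ 3 * inverse (fk 1 ^ 6 * fk 2 ^ 3)"

definition btbar :: "nat \<Rightarrow> rat" where
  "btbar n = fps_nth btbar_gf n"

end

(*
  By Gauss's identity f_1^2 = f_2 phi(-q), the generating function is 1 / (phi(-q) phi(-q^2))^3.
  Write S = sum_{k>=1} q^(k^2) and O = sum_{k>=1 odd} q^(k^2). Then phi(-q) = 1 + 2 S(q^4) - 2 O,
  phi(-q^2) = 1 + 2 (2 S(q^8) - S(q^2)), and a bijection on pairs of odd squares gives
  O^2 = (1 + 2 S(q^8)) (S(q^2) - S(q^8)).

  Modulo 64 the inverse of (1 + 2x)^3 is a polynomial in x, so the generating function is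
  congruent to A(S(q^2), S(q^4), S(q^8)) + O B(S(q^2), S(q^4), S(q^8)) for integer polynomials
  A and B. As O has only odd exponents, taking the even part U_2 turns this into
  A(S, S(q^2), S(q^4)); substituting S = S(q^4) + O and reducing with the relation for O^2
  restores the same shape. After three steps the polynomial A reproduces itself, so U_2^4 and
  U_2^3 of the generating function agree modulo 64, which is bt(16n) = bt(8n) mod 64.
  Induction on alpha gives the general case.
*)

theory Submission
  imports Defs
begin

unbundle fps_syntax

section \<open>Agreement of power series up to a given order\<close>

definition agree_upto :: "nat \<Rightarrow> 'a::comm_ring_1 fps \<Rightarrow> 'a fps \<Rightarrow> bool" where
  "agree_upto m f g \<longleftrightarrow> fps_X ^ m dvd f - g"

lemma agree_upto_nth:
  assumes "agree_upto m f g" "i < m"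
  shows "f $ i = g $ i"
proof -
  obtain h where "f - g = fps_X ^ m * h"
    using assms(1) unfolding agree_upto_def by (elim dvdE)
  then have "(f - g) $ i = 0"
    using assms(2) by (simp add: fps_X_power_mult_nth)
  then show ?thesis by simp
qed

lemma agree_uptoI:
  assumes "\<And>i. i < m \<Longrightarrow> f $ i = g $ i"
  shows "agree_upto m f g"
proof (cases "f = g")
  case False
  then have "m \<le> subdegree (f - g)"
    using assms by (intro subdegree_geI) auto
  then have "f - g = fps_shift m (f - g) * fps_X ^ m"
    by (rule subdegree_decompose')
  then show ?thesis
    unfolding agree_upto_def using dvd_triv_right by metis
qed (simp add: agree_upto_def)

lemma agree_upto_refl [simp]: "agree_upto m f f"
  by (simp add: agree_upto_def)

lemma agree_upto_sym: "agree_upto m f g \<Longrightarrow> agree_upto m g f"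
  unfolding agree_upto_def by (subst dvd_minus_iff[symmetric]) simp

lemma agree_upto_trans: "agree_upto m f g \<Longrightarrow> agree_upto m g h \<Longrightarrow> agree_upto m f h"
  unfolding agree_upto_def using dvd_add[of _ "f - g" "g - h"] by simp

lemma agree_upto_add:
  "agree_upto m f g \<Longrightarrow> agree_upto m f' g' \<Longrightarrow> agree_upto m (f + f') (g + g')"
  unfolding agree_upto_def using dvd_add[of _ "f - g" "f' - g'"] by (simp add: algebra_simps)

lemma agree_upto_diff:
  "agree_upto m f g \<Longrightarrow> agree_upto m f' g' \<Longrightarrow> agree_upto m (f - f') (g - g')"
proof -
  assume "agree_upto m f g" "agree_upto m f' g'"
  then have "fps_X ^ m dvd (f - g) - (f' - g')"
    unfolding agree_upto_def by (rule dvd_diff)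
  then show ?thesis
    unfolding agree_upto_def by (simp add: algebra_simps)
qed

lemma agree_upto_mult:
  assumes "agree_upto m f g" "agree_upto m f' g'"
  shows "agree_upto m (f * f') (g * g')"
proof -
  have "f * f' - g * g' = (f - g) * f' + g * (f' - g')"
    by (simp add: algebra_simps)
  then show ?thesis
    using assms unfolding agree_upto_def by (simp add: dvd_add dvd_mult dvd_mult2)
qed

lemma agree_upto_mono: "agree_upto m f g \<Longrightarrow> k \<le> m \<Longrightarrow> agree_upto k f g"
  unfolding agree_upto_def using le_imp_power_dvd dvd_trans by blast

lemma agree_upto_shift:
  "agree_upto m f g \<Longrightarrow> agree_upto (m + j) (fps_X ^ j * f) (fps_X ^ j * g)"
  unfolding agree_upto_def
  by (simp add: power_add right_diff_distrib[symmetric] mult.commute[of "fps_X ^ m"] mult_dvd_mono)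

lemma agree_upto_inverse:
  fixes f g :: "'a::field fps"
  assumes "agree_upto m f g" "f $ 0 \<noteq> 0" "g $ 0 \<noteq> 0"
  shows "agree_upto m (inverse f) (inverse g)"
proof -
  have "inverse f - inverse g = - (inverse f * inverse g * (f - g))"
    using assms by (simp add: algebra_simps inverse_mult_eq_1 inverse_mult_eq_1')
  then show ?thesis
    using assms(1) unfolding agree_upto_def by (simp add: dvd_mult)
qed

lemma agree_upto_sum:
  "(\<And>x. x \<in> A \<Longrightarrow> agree_upto m (f x) (g x)) \<Longrightarrow> agree_upto m (sum f A) (sum g A)"
  by (induction A rule: infinite_finite_induct) (auto intro: agree_upto_add)

lemma agree_upto_prod:
  "(\<And>x. x \<in> A \<Longrightarrow> agree_upto m (f x) (g x)) \<Longrightarrow> agree_upto m (prod f A) (prod g A)"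
  by (induction A rule: infinite_finite_induct) (auto intro: agree_upto_mult)

lemma fps_eq_if_agree_upto: "(\<And>m. agree_upto m f g) \<Longrightarrow> f = g"
  by (rule fps_ext) (blast intro: agree_upto_nth lessI)

lemma agree_upto_X_power_0: "m \<le> k \<Longrightarrow> agree_upto m (fps_X ^ k) 0"
  unfolding agree_upto_def by (simp add: le_imp_power_dvd)

lemma agree_upto_one_minus_X_power: "m \<le> k \<Longrightarrow> agree_upto m (1 - fps_X ^ k) 1"
  unfolding agree_upto_def by (simp add: le_imp_power_dvd)

section \<open>The substitution of q^2 for q and the operator U_2\<close>

lemma fps_compose_X2_nth:
  "(f oo fps_X ^ 2) $ n = (if even n then f $ (n div 2) else (0::'a::comm_ring_1))"
proof -
  have "(f oo fps_X ^ 2) $ n = (\<Sum>i=0..n. if n = 2 * i then f $ i else 0)"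
    by (simp add: fps_compose_nth power_mult[symmetric] mult.commute if_distrib cong: if_cong)
  also have "\<dots> = (if even n then f $ (n div 2) else 0)"
    by (auto simp: sum.delta' elim!: evenE intro!: sum.neutral)
  finally show ?thesis .
qed

lemma fps_compose_X2_mult: "(f * g) oo fps_X ^ 2 = (f oo fps_X ^ 2) * (g oo fps_X ^ 2 :: 'a::idom fps)"
  by (simp add: fps_compose_mult_distrib)

lemma fps_compose_X2_power: "f ^ k oo fps_X ^ 2 = (f oo fps_X ^ 2) ^ k"
  for f :: "'a::idom fps"
  by (simp add: fps_compose_power)

lemmas fps_compose_X2_simps = fps_compose_add_distrib fps_compose_sub_distrib fps_compose_uminus
  fps_compose_X2_mult fps_compose_X2_power numeral_compose fps_compose_1

lemma agree_upto_compose_X2: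
  fixes f g :: "'a::idom fps"
  assumes "agree_upto m f g"
  shows "agree_upto m (f oo fps_X ^ 2) (g oo fps_X ^ 2)"
proof -
  obtain h where "f - g = fps_X ^ m * h"
    using assms unfolding agree_upto_def by (elim dvdE)
  then have "(f oo fps_X ^ 2) - (g oo fps_X ^ 2) = fps_X ^ (2 * m) * (h oo fps_X ^ 2)"
    by (simp add: fps_compose_X2_simps fps_compose_sub_distrib[symmetric] power_mult[symmetric]
        mult.commute)
  then have "agree_upto (2 * m) (f oo fps_X ^ 2) (g oo fps_X ^ 2)"
    unfolding agree_upto_def by simp
  then show ?thesis
    by (rule agree_upto_mono) simp
qed

definition U2 :: "'a::zero fps \<Rightarrow> 'a fps" where
  "U2 f = Abs_fps (\<lambda>n. f $ (2 * n))"

lemma U2_nth [simp]: "U2 f $ n = f $ (2 * n)"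
  by (simp add: U2_def)

lemma U2_add: "U2 (f + g) = U2 f + U2 g"
  by (rule fps_ext) simp

lemma U2_diff: "U2 (f - g) = U2 f - U2 (g :: 'a::ab_group_add fps)"
  by (rule fps_ext) simp

lemma sum_even_indices:
  "(\<Sum>i=0..2*m. if even i then h i else 0) = (\<Sum>j=0..m. h (2*j) :: 'a::comm_monoid_add)"
  for m :: nat
proof -
  have "(\<Sum>i=0..2*m. if even i then h i else 0)
      = (\<Sum>i\<in>(\<lambda>j. 2*j) ` {0..m}. if even i then h i else 0)"
    by (rule sum.mono_neutral_right) auto
  also have "\<dots> = (\<Sum>j=0..m. h (2*j))"
    by (subst sum.reindex) (auto simp: inj_on_def)
  finally show ?thesis .
qed

lemma U2_compose_X2_mult: "U2 ((f oo fps_X ^ 2) * g) = f * U2 (g :: 'a::comm_ring_1 fps)"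
proof (rule fps_ext)
  fix n
  have "U2 ((f oo fps_X ^ 2) * g) $ n
      = (\<Sum>i=0..2*n. if even i then f $ (i div 2) * g $ (2*n - i) else 0)"
    unfolding U2_nth fps_mult_nth fps_compose_X2_nth by (intro sum.cong) auto
  also have "\<dots> = (\<Sum>j=0..n. f $ j * g $ (2*n - 2*j))"
    by (subst sum_even_indices) simp
  also have "\<dots> = (f * U2 g) $ n"
    unfolding fps_mult_nth U2_nth by (intro sum.cong) (auto simp: right_diff_distrib')
  finally show "U2 ((f oo fps_X ^ 2) * g) $ n = (f * U2 g) $ n" .
qed

lemma U2_compose_X2: "U2 (f oo fps_X ^ 2) = (f :: 'a::comm_ring_1 fps)"
proof -
  have "U2 1 = (1 :: 'a fps)"
    by (rule fps_ext) simp
  then show ?thesis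
    using U2_compose_X2_mult[of f 1] by simp
qed

section \<open>Generating functions of weighted sets\<close>

definition weight_gf :: "'b set \<Rightarrow> ('b \<Rightarrow> nat) \<Rightarrow> 'a::comm_ring_1 fps" where
  "weight_gf A w = Abs_fps (\<lambda>n. of_nat (card {x\<in>A. w x = n}))"

definition finite_fibres :: "'b set \<Rightarrow> ('b \<Rightarrow> nat) \<Rightarrow> bool" where
  "finite_fibres A w \<longleftrightarrow> (\<forall>n. finite {x\<in>A. w x = n})"

lemma weight_gf_nth: "weight_gf A w $ n = of_nat (card {x\<in>A. w x = n})"
  by (simp add: weight_gf_def)

lemma weight_gf_compose_X2: "weight_gf A w oo fps_X ^ 2 = weight_gf A (\<lambda>x. 2 * w x)"
proof (rule fps_ext)
  fix n
  have fibre: "{x\<in>A. 2 * w x = n} = (if even n then {x\<in>A. w x = n div 2} else {})"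
    by auto
  show "(weight_gf A w oo fps_X ^ 2) $ n = weight_gf A (\<lambda>x. 2 * w x) $ n"
    by (simp add: fps_compose_X2_nth weight_gf_nth fibre)
qed

lemma weight_gf_Un:
  assumes "A \<inter> B = {}" "finite_fibres A w" "finite_fibres B w"
  shows "weight_gf (A \<union> B) w = weight_gf A w + weight_gf B w"
proof (rule fps_ext)
  fix n
  have "{x\<in>A \<union> B. w x = n} = {x\<in>A. w x = n} \<union> {x\<in>B. w x = n}" by auto
  moreover have "card ({x\<in>A. w x = n} \<union> {x\<in>B. w x = n})
      = card {x\<in>A. w x = n} + card {x\<in>B. w x = n}"
    using assms by (intro card_Un_disjoint) (auto simp: finite_fibres_def)
  ultimately show "weight_gf (A \<union> B) w $ n = (weight_gf A w + weight_gf B w) $ n"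
    by (simp add: weight_gf_nth)
qed

lemma weight_gf_reindex:
  assumes "bij_betw h A B" "\<And>x. x \<in> A \<Longrightarrow> w' (h x) = w x"
  shows "weight_gf A w = weight_gf B w'"
proof (rule fps_ext)
  fix n
  have "bij_betw h {x\<in>A. w x = n} {y\<in>B. w' y = n}"
    using assms by (auto simp: bij_betw_def inj_on_def image_iff)
  then show "weight_gf A w $ n = weight_gf B w' $ n"
    by (simp add: weight_gf_nth bij_betw_same_card)
qed

lemma weight_gf_mult:
  assumes "finite_fibres A w" "finite_fibres B v"
  shows "weight_gf A w * weight_gf B v = weight_gf (A \<times> B) (\<lambda>(a, b). w a + v b)"
proof (rule fps_ext)
  fix n
  let ?S = "\<lambda>i. {x\<in>A. w x = i} \<times> {y\<in>B. v y = n - i}"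
  have eq: "{p\<in>A \<times> B. (\<lambda>(a, b). w a + v b) p = n} = (\<Union>i\<in>{0..n}. ?S i)"
    by auto
  have "card (\<Union>i\<in>{0..n}. ?S i) = (\<Sum>i=0..n. card (?S i))"
    using assms by (intro card_UN_disjoint) (auto simp: finite_fibres_def)
  then show "(weight_gf A w * weight_gf B v) $ n = weight_gf (A \<times> B) (\<lambda>(a, b). w a + v b) $ n"
    by (simp add: weight_gf_nth fps_mult_nth eq card_cartesian_product)
qed

lemma weight_gf_agree_upto:
  fixes A :: "'b set"
  assumes "finite {x\<in>A. w x < m}"
  shows "agree_upto m (weight_gf A w) (\<Sum>x\<in>{x\<in>A. w x < m}. fps_X ^ w x :: 'a::comm_ring_1 fps)"
proof (rule agree_uptoI)
  fix i assume i: "i < m"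
  have "(\<Sum>x\<in>{x\<in>A. w x < m}. fps_X ^ w x :: 'a fps) $ i
        = (\<Sum>x\<in>{x\<in>A. w x < m}. if i = w x then 1 else 0)"
    by (simp add: fps_sum_nth)
  also have "\<dots> = of_nat (card {x\<in>{x\<in>A. w x < m}. i = w x})"
    using assms by (simp add: sum.If_cases Int_def conj_commute)
  also have "{x\<in>{x\<in>A. w x < m}. i = w x} = {x\<in>A. w x = i}"
    using i by auto
  finally show "weight_gf A w $ i = (\<Sum>x\<in>{x\<in>A. w x < m}. fps_X ^ w x :: 'a fps) $ i"
    by (simp add: weight_gf_nth)
qed

section \<open>Sums over squares\<close>

definition squares_gf :: "int set \<Rightarrow> 'a::comm_ring_1 fps" where
  "squares_gf A = weight_gf A (\<lambda>k. nat (k^2))"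

lemma abs_le_square: "\<bar>x::int\<bar> \<le> x^2"
proof (cases "x = 0")
  case False
  then have "\<bar>x\<bar> * 1 \<le> \<bar>x\<bar> * \<bar>x\<bar>"
    by (intro mult_left_mono) auto
  then show ?thesis
    by (simp add: power2_eq_square abs_mult_self_eq)
qed simp

lemma finite_fibres_square:
  assumes "\<And>k. nat (k^2) \<le> w k"
  shows "finite_fibres (A :: int set) w"
  unfolding finite_fibres_def
proof
  fix n
  have "\<bar>x\<bar> \<le> int n" if "w x = n" for x
    using abs_le_square[of x] assms[of x] that by linarith
  then have "{x\<in>A. w x = n} \<subseteq> {-int n..int n}"
    by (force simp: abs_le_iff)
  then show "finite {x\<in>A. w x = n}"
    by (rule finite_subset) simp
qed

lemma squares_gf_Un:
  "A \<inter> B = {} \<Longrightarrow> squares_gf (A \<union> B) = squares_gf A + squares_gf B"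
  unfolding squares_gf_def by (intro weight_gf_Un finite_fibres_square) simp_all

lemma uminus_image_eq: "uminus ` A = {x::'a::group_add. - x \<in> A}"
  by (auto intro: image_eqI[where x = "- x" for x])

lemma squares_gf_uminus: "squares_gf (uminus ` A) = squares_gf A"
proof -
  have "bij_betw uminus A (uminus ` A)"
    by (simp add: bij_betw_def inj_on_def)
  then show ?thesis
    unfolding squares_gf_def by (rule weight_gf_reindex[symmetric]) simp
qed

lemma squares_gf_zero: "squares_gf {0} = 1"
proof (rule fps_ext)
  fix n
  have fibre: "{x. x = (0::int) \<and> nat (x^2) = n} = (if n = 0 then {0} else {})"
    by auto
  show "squares_gf {0} $ n = 1 $ n"
    by (simp add: squares_gf_def weight_gf_nth fibre)
qed

lemma squares_gf_nth_0: "squares_gf A $ 0 = (if 0 \<in> A then 1 else 0)"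
proof -
  have "{k\<in>A. nat (k^2) = 0} = (if 0 \<in> A then {0} else {})"
    by auto
  then show ?thesis
    by (simp add: squares_gf_def weight_gf_nth)
qed

lemma squares_gf_double:
  "squares_gf ((\<lambda>k. 2 * k) ` A) = (squares_gf A oo fps_X ^ 2) oo fps_X ^ 2"
proof -
  have bij: "bij_betw (\<lambda>k. 2 * k) A ((\<lambda>k. 2 * k) ` A)"
    by (simp add: bij_betw_def inj_on_def)
  have "squares_gf ((\<lambda>k. 2 * k) ` A) = weight_gf A (\<lambda>k. 2 * (2 * nat (k^2)))"
    unfolding squares_gf_def
    by (rule sym, rule weight_gf_reindex[OF bij]) (simp add: power_mult_distrib nat_mult_distrib)
  also have "\<dots> = (squares_gf A oo fps_X ^ 2) oo fps_X ^ 2"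
    by (simp only: squares_gf_def weight_gf_compose_X2)
  finally show ?thesis .
qed

text \<open>In Ramanujan's notation, \<open>squares_gf UNIV\<close> is \<open>\<phi>(q)\<close>, \<open>phi_neg\<close> is
  \<open>\<phi>(-q)\<close> and \<open>Sodd\<close> is \<open>q \<psi>(q^8)\<close>.\<close>

definition S :: "rat fps" where
  "S = squares_gf {k. 0 < k}"

definition S2 :: "rat fps" where
  "S2 = S oo fps_X ^ 2"

definition S4 :: "rat fps" where
  "S4 = S2 oo fps_X ^ 2"

definition S8 :: "rat fps" where
  "S8 = S4 oo fps_X ^ 2"

definition Sodd :: "rat fps" where
  "Sodd = squares_gf {k. 0 < k \<and> odd k}"

definition phi_neg :: "rat fps" where
  "phi_neg = squares_gf {k. even k} - squares_gf {k. odd k}"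

lemma squares_gf_UNIV: "squares_gf UNIV = 1 + 2 * S"
proof -
  have split: "(UNIV :: int set) = {0} \<union> ({k. 0 < k} \<union> uminus ` {k. 0 < k})"
    unfolding uminus_image_eq by auto
  have "squares_gf UNIV = squares_gf {0} + squares_gf ({k. 0 < k} \<union> uminus ` {k::int. 0 < k})"
    by (subst split, rule squares_gf_Un) (auto simp: uminus_image_eq)
  also have "squares_gf ({k. 0 < k} \<union> uminus ` {k::int. 0 < k})
      = S + squares_gf (uminus ` {k::int. 0 < k})"
    unfolding S_def by (rule squares_gf_Un) (auto simp: uminus_image_eq)
  also have "squares_gf {0} + (S + squares_gf (uminus ` {k::int. 0 < k})) = 1 + 2 * S"
    by (simp only: squares_gf_zero squares_gf_uminus S_def[symmetric] mult_2)
  finally show ?thesis .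
qed

lemma S_eq: "S = S4 + Sodd"
proof -
  have split: "{k::int. 0 < k} = (\<lambda>k. 2 * k) ` {k. 0 < k} \<union> {k. 0 < k \<and> odd k}"
    by (auto simp: image_iff elim!: evenE)
  have "S = squares_gf ((\<lambda>k. 2 * k) ` {k. 0 < k}) + Sodd"
    unfolding S_def Sodd_def by (subst split, rule squares_gf_Un) auto
  also have "squares_gf ((\<lambda>k. 2 * k) ` {k. 0 < k}) = S4"
    unfolding squares_gf_double S_def[symmetric] S2_def[symmetric] S4_def[symmetric] ..
  finally show ?thesis .
qed

lemma phi_neg_eq: "phi_neg = 1 + 2 * S4 - 2 * Sodd"
proof -
  have "{k::int. even k} = (\<lambda>k. 2 * k) ` UNIV"
    by (auto elim!: evenE)
  then have "squares_gf {k::int. even k} = (squares_gf UNIV oo fps_X ^ 2) oo fps_X ^ 2"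
    by (simp only: squares_gf_double)
  also have "\<dots> = 1 + 2 * S4"
    by (simp only: squares_gf_UNIV fps_compose_X2_simps S2_def[symmetric] S4_def[symmetric])
  finally have even: "squares_gf {k::int. even k} = 1 + 2 * S4" .
  have split: "{k::int. odd k} = {k. 0 < k \<and> odd k} \<union> uminus ` {k. 0 < k \<and> odd k}"
    unfolding uminus_image_eq by auto presburger
  have "squares_gf {k::int. odd k} = Sodd + squares_gf (uminus ` {k::int. 0 < k \<and> odd k})"
    unfolding Sodd_def by (subst split, rule squares_gf_Un) auto
  also have "\<dots> = 2 * Sodd"
    by (simp only: squares_gf_uminus Sodd_def[symmetric] mult_2)
  finally have odd: "squares_gf {k::int. odd k} = 2 * Sodd" .
  show ?thesis
    unfolding phi_neg_def even odd ..
qed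

lemma Sodd_compose_X2: "Sodd oo fps_X ^ 2 = S2 - S8"
proof -
  have Sodd: "Sodd = S - S4"
    using S_eq by (simp add: algebra_simps)
  show ?thesis
    unfolding Sodd fps_compose_sub_distrib S2_def S8_def ..
qed

lemma phi_neg_compose_X2: "phi_neg oo fps_X ^ 2 = 1 + 2 * (2 * S8 - S2)"
proof -
  have "phi_neg oo fps_X ^ 2 = 1 + 2 * S8 - 2 * (S2 - S8)"
    by (simp only: phi_neg_eq fps_compose_X2_simps Sodd_compose_X2 S8_def)
  then show ?thesis
    by (simp add: algebra_simps)
qed

lemma U2_Sodd: "U2 Sodd = 0"
proof (rule fps_ext)
  fix n
  have "nat (k^2) \<noteq> 2 * n" if "odd k" for k :: int
  proof
    assume "nat (k^2) = 2 * n"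
    then have "even (k^2)"
      using even_nat_iff[of "k^2"] by simp
    with that show False
      by simp
  qed
  then have fibre: "{k\<in>{k::int. 0 < k \<and> odd k}. nat (k^2) = 2 * n} = {}"
    by auto
  show "U2 Sodd $ n = 0 $ n"
    unfolding U2_nth Sodd_def squares_gf_def weight_gf_nth fibre by simp
qed

text \<open>For odd \<open>r > 0\<close>, \<open>odd_pair (k, r) = (u + v, u - v)\<close> with \<open>(u, v) = (r, 2k)\<close> if
  \<open>2\<bar>k\<bar> < r\<close> and \<open>(u, v) = (2\<bar>k\<bar>, sgn k * r)\<close> otherwise; the parity of \<open>v\<close>
  tells the two cases apart, which is how \<open>odd_pair_inv\<close> undoes it.\<close>

definition odd_pair :: "int \<times> int \<Rightarrow> int \<times> int" where
  "odd_pair = (\<lambda>(k, r). if 2 * \<bar>k\<bar> < r then (r + 2 * k, r - 2 * k)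
                       else if 0 < k then (2 * k + r, 2 * k - r) else (- 2 * k - r, - 2 * k + r))"

definition odd_pair_inv :: "int \<times> int \<Rightarrow> int \<times> int" where
  "odd_pair_inv = (\<lambda>(m, n). let u = (m + n) div 2; v = (m - n) div 2 in
                       if even v then (v div 2, u) else if 0 < v then (u div 2, v) else (- (u div 2), - v))"

lemma odd_pair_inv_odd_pair:
  assumes "0 < r" "odd r"
  shows "odd_pair_inv (odd_pair (k, r)) = (k, r)"
proof -
  have neg: "- (2 * r) div 2 = - r"
    by simp
  consider "2 * \<bar>k\<bar> < r" | "\<not> 2 * \<bar>k\<bar> < r" "0 < k" | "\<not> 2 * \<bar>k\<bar> < r" "k < 0"
    using assms by fastforce
  then show ?thesis
    by cases (use assms in \<open>auto simp: odd_pair_def odd_pair_inv_def Let_def neg\<close>)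
qed

lemma odd_pair_inv:
  assumes "0 < m" "odd m" "0 < n" "odd n"
  shows "odd_pair (odd_pair_inv (m, n)) = (m, n)"
    and "0 < snd (odd_pair_inv (m, n)) \<and> odd (snd (odd_pair_inv (m, n)))"
proof -
  define u where "u = (m + n) div 2"
  define v where "v = (m - n) div 2"
  have "m + n = 2 * u" "m - n = 2 * v"
    using assms unfolding u_def v_def by (simp_all add: dvd_mult_div_cancel)
  then have m: "m = u + v" and n: "n = u - v" and uv: "\<bar>v\<bar> < u"
    using assms by linarith+
  have "odd (u + v)"
    using assms(2) m by simp
  then consider "even v" "odd u" | "odd v" "even u" "0 < v" | "odd v" "even u" "v < 0"
    by fastforce
  note cases = this
  have "odd_pair (odd_pair_inv (m, n)) = (u + v, u - v)"
    using cases by cases (use uv in \<open>auto simp: odd_pair_def odd_pair_inv_def Let_def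
      u_def[symmetric] v_def[symmetric] elim!: evenE\<close>)
  then show "odd_pair (odd_pair_inv (m, n)) = (m, n)"
    using m n by simp
  show "0 < snd (odd_pair_inv (m, n)) \<and> odd (snd (odd_pair_inv (m, n)))"
    using cases by cases (use uv in \<open>simp_all add: odd_pair_inv_def Let_def
      u_def[symmetric] v_def[symmetric]\<close>)
qed

lemma bij_betw_odd_pair:
  defines "P \<equiv> {k::int. 0 < k \<and> odd k}"
  shows "bij_betw odd_pair (UNIV \<times> P) (P \<times> P)"
proof (rule bij_betw_byWitness[where f' = odd_pair_inv])
  show "\<forall>a\<in>UNIV \<times> P. odd_pair_inv (odd_pair a) = a"
    by (auto simp: P_def odd_pair_inv_odd_pair)
  show "\<forall>a\<in>P \<times> P. odd_pair (odd_pair_inv a) = a"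
    by (auto simp: P_def odd_pair_inv)
  show "odd_pair ` (UNIV \<times> P) \<subseteq> P \<times> P"
  proof
    fix p
    assume "p \<in> odd_pair ` (UNIV \<times> P)"
    then obtain k r where p: "p = odd_pair (k, r)" and "r \<in> P"
      by auto
    then have "0 < r" "odd r" "r \<noteq> 2 * k" "r \<noteq> - 2 * k"
      by (auto simp: P_def)
    then show "p \<in> P \<times> P"
      unfolding p by (auto simp: P_def odd_pair_def abs_less_iff)
  qed
  show "odd_pair_inv ` (P \<times> P) \<subseteq> UNIV \<times> P"
  proof
    fix p
    assume "p \<in> odd_pair_inv ` (P \<times> P)"
    then obtain m n where "p = odd_pair_inv (m, n)" "m \<in> P" "n \<in> P"
      by auto
    then show "p \<in> UNIV \<times> P"
      using odd_pair_inv(2)[of m n] by (simp add: P_def mem_Times_iff)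
  qed
qed


lemma odd_pair_squares:
  "(\<lambda>(a, b). nat (a^2) + nat (b^2)) (odd_pair (k, r)) = 2 * (2 * (2 * nat (k^2))) + 2 * nat (r^2)"
proof -
  obtain a b where ab: "odd_pair (k, r) = (a, b)"
    by fastforce
  have "(fst (odd_pair (k, r)))^2 + (snd (odd_pair (k, r)))^2 = 8 * k^2 + 2 * r^2"
    by (simp add: odd_pair_def power2_eq_square algebra_simps)
  then have "a^2 + b^2 = 8 * k^2 + 2 * r^2"
    using ab by simp
  then have "nat (a^2) + nat (b^2) = nat (8 * k^2 + 2 * r^2)"
    by (simp add: nat_add_distrib[symmetric])
  also have "\<dots> = 2 * (2 * (2 * nat (k^2))) + 2 * nat (r^2)"
    by (simp add: nat_add_distrib nat_mult_distrib)
  finally show ?thesis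
    using ab by simp
qed

lemma Sodd_square: "Sodd^2 = (1 + 2 * S8) * (S2 - S8)"
proof -
  define P where "P = {k::int. 0 < k \<and> odd k}"
  have "Sodd^2 = Sodd * Sodd"
    by (rule power2_eq_square)
  also have "\<dots> = weight_gf (P \<times> P) (\<lambda>(a, b). nat (a^2) + nat (b^2))"
    unfolding Sodd_def squares_gf_def P_def
    by (intro weight_gf_mult finite_fibres_square) simp_all
  also have "\<dots> = weight_gf (UNIV \<times> P) (\<lambda>(k, r). 2 * (2 * (2 * nat (k^2))) + 2 * nat (r^2))"
    unfolding P_def
    by (rule sym, rule weight_gf_reindex[OF bij_betw_odd_pair]) (auto simp: odd_pair_squares)
  also have "\<dots> = weight_gf UNIV (\<lambda>k. 2 * (2 * (2 * nat (k^2)))) * weight_gf P (\<lambda>r. 2 * nat (r^2))"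
    by (rule sym, intro weight_gf_mult finite_fibres_square) simp_all
  also have "\<dots> = (((squares_gf UNIV oo fps_X ^ 2) oo fps_X ^ 2) oo fps_X ^ 2) * (Sodd oo fps_X ^ 2)"
    by (simp only: squares_gf_def Sodd_def P_def weight_gf_compose_X2)
  also have "\<dots> = (1 + 2 * S8) * (S2 - S8)"
    by (simp only: squares_gf_UNIV Sodd_compose_X2 fps_compose_X2_simps S2_def[symmetric]
        S4_def[symmetric] S8_def[symmetric])
  finally show ?thesis .
qed

section \<open>Gauss's identity\<close>

definition qpoch :: "nat \<Rightarrow> 'a::field fps" where
  "qpoch n = (\<Prod>j=1..n. 1 - fps_X ^ j)"

text \<open>\<open>inv_qpoch m = 1 / (q; q)\<^sub>m\<close>, extended by 0 to negative \<open>m\<close>: this makes the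
  boundary terms in \<open>gauss_sum_Suc\<close> vanish.\<close>

definition inv_qpoch :: "int \<Rightarrow> 'a::field fps" where
  "inv_qpoch m = (if m < 0 then 0 else inverse (qpoch (nat m)))"

definition gauss_term :: "nat \<Rightarrow> int \<Rightarrow> 'a::field fps" where
  "gauss_term n k = (- 1) ^ nat \<bar>k\<bar> * fps_X ^ nat (k^2) * inv_qpoch (int n - k) * inv_qpoch (int n + k)"

definition gauss_sum :: "nat \<Rightarrow> 'a::field fps" where
  "gauss_sum n = (\<Sum>k = -int n..int n. gauss_term n k)"

definition gauss_corr :: "nat \<Rightarrow> int \<Rightarrow> 'a::field fps" where
  "gauss_corr n k =
     (- 1) ^ nat \<bar>k\<bar> * fps_X ^ nat (k^2 + int n + 1 - k) * inv_qpoch (int n + 1 - k) * inv_qpoch (int n + k)"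

lemma prod_one_minus_X_power_nth_0: "(\<Prod>j\<in>J. 1 - fps_X ^ f j :: 'a::comm_ring_1 fps) $ 0 = 1"
  if "\<And>j. j \<in> J \<Longrightarrow> 0 < f j"
proof -
  have "(\<Prod>j\<in>J. 1 - fps_X ^ f j :: 'a fps) $ 0 = (\<Prod>j\<in>J. (1 - fps_X ^ f j :: 'a fps) $ 0)"
    by (induction J rule: infinite_finite_induct) simp_all
  also have "\<dots> = 1"
    using that by (intro prod.neutral) simp
  finally show ?thesis .
qed

lemma qpoch_nth_0 [simp]: "qpoch n $ 0 = 1"
  unfolding qpoch_def by (rule prod_one_minus_X_power_nth_0) simp

lemma inv_qpoch_neg: "m < 0 \<Longrightarrow> inv_qpoch m = 0"
  by (simp add: inv_qpoch_def)

lemma inv_qpoch_pred: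
  assumes "0 \<le> m"
  shows "inv_qpoch (m - 1) = inv_qpoch m * (1 - fps_X ^ nat m)"
proof (cases "m = 0")
  case False
  then obtain j where j: "nat m = Suc j"
    using assms by (cases "nat m") auto
  have "qpoch (Suc j) = qpoch j * (1 - fps_X ^ Suc j :: 'a fps)"
    by (simp add: qpoch_def prod.cl_ivl_Suc)
  moreover have "(1 - fps_X ^ Suc j :: 'a fps) $ 0 \<noteq> 0"
    by simp
  ultimately have "inverse (qpoch j) = inverse (qpoch (Suc j)) * (1 - fps_X ^ Suc j :: 'a fps)"
    by (simp add: fps_inverse_mult mult.assoc inverse_mult_eq_1)
  moreover have "nat (m - 1) = j"
    using j by simp
  ultimately show ?thesis
    using assms False j by (simp add: inv_qpoch_def)
qed (simp add: inv_qpoch_def)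

lemma minus_one_power_abs_succ: "(- 1) ^ nat \<bar>k + 1\<bar> = - ((- 1) ^ nat \<bar>k\<bar> :: 'a::ring_1)"
proof (cases "0 \<le> k")
  case True
  then have e: "nat \<bar>k + 1\<bar> = Suc (nat \<bar>k\<bar>)"
    by simp
  show ?thesis
    unfolding e by simp
next
  case False
  then have e: "nat \<bar>k\<bar> = Suc (nat \<bar>k + 1\<bar>)"
    by simp
  show ?thesis
    unfolding e by simp
qed

lemma sum_int_telescope:
  "(\<Sum>k = a..a + int d. f k - f (k + 1)) = f a - (f (a + int d + 1) :: 'a::ab_group_add)"
proof (induction d)
  case (Suc d)
  have "{a..a + int (Suc d)} = insert (a + int (Suc d)) {a..a + int d}"
    by auto
  then show ?case
    using Suc by (simp add: ac_simps)
qed simp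

text \<open>With \<open>a = n + 1 - k\<close> and \<open>b = n + 1 + k\<close>, split
  \<open>1 - q^(a+b) = (1 - q^a)(1 - q^b) + q^a (1 - q^b) + q^b (1 - q^a)\<close>: the first piece gives
  \<open>gauss_term n k\<close>, the other two telescope in \<open>k\<close>.\<close>

lemma gauss_term_Suc_split:
  assumes k: "\<bar>k\<bar> \<le> int n + 1"
  shows "gauss_term (Suc n) k * (1 - fps_X ^ (2 * Suc n))
    = gauss_term n k + (gauss_corr n k - gauss_corr n (k + 1) :: 'a::field fps)"
proof -
  define N where "N = int n"
  define s where "s = ((- 1) ^ nat \<bar>k\<bar> :: 'a fps)"
  define e1 where "e1 = nat (N + 1 - k)"
  define e2 where "e2 = nat (N + 1 + k)"
  have k1: "0 \<le> N + 1 - k" "0 \<le> N + 1 + k"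
    using k unfolding N_def by auto
  have A: "inv_qpoch (N - k) = inv_qpoch (N + 1 - k) * (1 - fps_X ^ e1 :: 'a fps)"
    using inv_qpoch_pred[OF k1(1)] unfolding e1_def by (simp add: algebra_simps)
  have B: "inv_qpoch (N + k) = inv_qpoch (N + 1 + k) * (1 - fps_X ^ e2 :: 'a fps)"
    using inv_qpoch_pred[OF k1(2)] unfolding e2_def by (simp add: algebra_simps)
  have "e1 + e2 = 2 * Suc n"
    using k1 unfolding e1_def e2_def N_def by (simp add: nat_add_distrib[symmetric])
  then have Y: "fps_X ^ (2 * Suc n) = (fps_X ^ e1 * fps_X ^ e2 :: 'a fps)"
    by (simp add: power_add[symmetric])
  have T: "gauss_term (Suc n) k = s * fps_X ^ nat (k^2) * inv_qpoch (N + 1 - k) * inv_qpoch (N + 1 + k)"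
    by (simp add: gauss_term_def s_def N_def add.commute)
  have G: "gauss_term n k = s * fps_X ^ nat (k^2) * inv_qpoch (N - k) * inv_qpoch (N + k)"
    by (simp add: gauss_term_def s_def N_def)
  have "nat (k^2 + N + 1 - k) = nat (k^2) + e1"
    using k1 unfolding e1_def by (simp add: nat_add_distrib[symmetric] algebra_simps)
  then have C: "gauss_corr n k = s * fps_X ^ nat (k^2) * fps_X ^ e1 * inv_qpoch (N + 1 - k) * inv_qpoch (N + k)"
    by (simp add: gauss_corr_def s_def N_def power_add)
  have E2: "nat ((k + 1)^2 + N + 1 - (k + 1)) = nat (k^2) + e2"
    using k1 unfolding e2_def by (simp add: nat_add_distrib[symmetric] algebra_simps power2_eq_square)
  have idx: "N + 1 - (k + 1) = N - k" "N + (k + 1) = N + 1 + k"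
    by simp_all
  have C': "gauss_corr n (k + 1)
      = - s * fps_X ^ nat (k^2) * fps_X ^ e2 * inv_qpoch (N - k) * inv_qpoch (N + 1 + k)"
    unfolding gauss_corr_def N_def[symmetric] minus_one_power_abs_succ s_def[symmetric] idx E2 power_add
    by (simp add: mult_ac)
  show ?thesis
    unfolding T G C C' A B Y by (simp add: algebra_simps)
qed

lemma gauss_sum_Suc:
  "gauss_sum (Suc n) * (1 - fps_X ^ (2 * Suc n)) = (gauss_sum n :: 'a::field fps)"
proof -
  define N where "N = int n"
  let ?c = "gauss_corr n :: int \<Rightarrow> 'a fps"
  have "gauss_sum (Suc n) * (1 - fps_X ^ (2 * Suc n))
      = (\<Sum>k = -(N + 1)..N + 1. gauss_term (Suc n) k * (1 - fps_X ^ (2 * Suc n)) :: 'a fps)"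
    by (simp add: gauss_sum_def sum_distrib_right N_def add.commute)
  also have "\<dots> = (\<Sum>k = -(N + 1)..N + 1. gauss_term n k + (?c k - ?c (k + 1)))"
    by (intro sum.cong refl gauss_term_Suc_split) (auto simp: N_def)
  also have "\<dots> = (\<Sum>k = -(N + 1)..N + 1. gauss_term n k) + (\<Sum>k = -(N + 1)..N + 1. ?c k - ?c (k + 1))"
    by (rule sum.distrib)
  also have "(\<Sum>k = -(N + 1)..N + 1. ?c k - ?c (k + 1)) = ?c (-(N + 1)) - ?c (N + 2)"
  proof -
    have e: "-(N + 1) + int (2 * n + 2) = N + 1"
      by (simp add: N_def)
    show ?thesis
      using sum_int_telescope[of ?c "-(N + 1)" "2 * n + 2"] unfolding e by (simp add: add.assoc)
  qed
  also have "?c (-(N + 1)) = 0"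
    by (simp add: gauss_corr_def inv_qpoch_neg N_def)
  also have "?c (N + 2) = 0"
    by (simp add: gauss_corr_def inv_qpoch_neg N_def)
  also have "(\<Sum>k = -(N + 1)..N + 1. gauss_term n k) = (\<Sum>k = -N..N. gauss_term n k :: 'a fps)"
  proof (rule sum.mono_neutral_right)
    show "\<forall>i\<in>{-(N + 1)..N + 1} - {-N..N}. gauss_term n i = (0 :: 'a fps)"
    proof
      fix i
      assume "i \<in> {-(N + 1)..N + 1} - {-N..N}"
      then have "i = N + 1 \<or> i = -(N + 1)"
        by auto
      then show "gauss_term n i = (0 :: 'a fps)"
        by (auto simp: gauss_term_def inv_qpoch_neg N_def)
    qed
  qed auto
  finally show ?thesis
    by (simp add: gauss_sum_def N_def)
qed

lemma gauss_sum_mult_prod: "gauss_sum n * (\<Prod>j=1..n. 1 - fps_X ^ (2 * j)) = (1 :: 'a::field fps)"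
proof (induction n)
  case 0
  then show ?case
    by (simp add: gauss_sum_def gauss_term_def inv_qpoch_def qpoch_def)
next
  case (Suc n)
  have "gauss_sum (Suc n) * (\<Prod>j=1..Suc n. 1 - fps_X ^ (2 * j))
      = (gauss_sum (Suc n) * (1 - fps_X ^ (2 * Suc n))) * (\<Prod>j=1..n. 1 - fps_X ^ (2 * j) :: 'a fps)"
    by (simp add: prod.cl_ivl_Suc ac_simps)
  then show ?case
    using Suc by (simp only: gauss_sum_Suc)
qed

lemma qpoch_split:
  assumes "a \<le> b"
  shows "qpoch b = qpoch a * (\<Prod>j=a+1..b. 1 - fps_X ^ j)"
proof -
  have "{1..b} = {1..a} \<union> {a+1..b}" "{1..a} \<inter> {a+1..b} = {}"
    using assms by auto
  then show ?thesis
    unfolding qpoch_def by (simp add: prod.union_disjoint)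
qed

lemma agree_upto_qpoch_ratio: "agree_upto (min a n + 1) (qpoch n * inverse (qpoch a)) (1 :: 'a::field fps)"
proof -
  have tail: "agree_upto (c + 1) (\<Prod>j=c+1..d. 1 - fps_X ^ j) (1 :: 'a fps)" for c d
    using agree_upto_prod[of "{c+1..d}" "c + 1" "\<lambda>j. 1 - fps_X ^ j" "\<lambda>_. 1"]
    by (simp add: agree_upto_one_minus_X_power)
  have tail_nth_0: "(\<Prod>j=c+1..d. 1 - fps_X ^ j :: 'a fps) $ 0 = 1" for c d
    by (rule prod_one_minus_X_power_nth_0) simp
  show ?thesis
  proof (cases "a \<le> n")
    case True
    then have "qpoch n * inverse (qpoch a)
        = (\<Prod>j=a+1..n. 1 - fps_X ^ j :: 'a fps) * (qpoch a * inverse (qpoch a))"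
      by (simp add: qpoch_split[OF True] ac_simps)
    then have "qpoch n * inverse (qpoch a) = (\<Prod>j=a+1..n. 1 - fps_X ^ j :: 'a fps)"
      by (simp add: inverse_mult_eq_1')
    then show ?thesis
      using tail[of a n] True by simp
  next
    case False
    then have "qpoch n * inverse (qpoch a) = inverse (\<Prod>j=n+1..a. 1 - fps_X ^ j :: 'a fps)"
      by (simp add: qpoch_split[of n a] fps_inverse_mult mult.assoc[symmetric] inverse_mult_eq_1')
    moreover have "agree_upto (n + 1) (inverse (\<Prod>j=n+1..a. 1 - fps_X ^ j :: 'a fps)) (inverse 1)"
      by (rule agree_upto_inverse[OF tail]) (use tail_nth_0[of n a] in simp_all)
    ultimately show ?thesis
      using False by simp
  qed
qed

lemma agree_upto_qpoch_gauss_sum: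
  "agree_upto (n + 1) (qpoch n * qpoch n * gauss_sum n)
     (\<Sum>k = -int n..int n. (- 1) ^ nat \<bar>k\<bar> * fps_X ^ nat (k^2) :: 'a::field fps)"
proof -
  define N where "N = int n"
  have "qpoch n * qpoch n * gauss_sum n = (\<Sum>k = -N..N. (- 1) ^ nat \<bar>k\<bar> *
      (fps_X ^ nat (k^2) * ((qpoch n * inv_qpoch (N - k)) * (qpoch n * inv_qpoch (N + k)))) :: 'a fps)"
    unfolding gauss_sum_def gauss_term_def N_def sum_distrib_left
    by (intro sum.cong refl) (simp only: ac_simps)
  moreover have termwise: "agree_upto (n + 1)
      ((- 1) ^ nat \<bar>k\<bar> * (fps_X ^ nat (k^2) * ((qpoch n * inv_qpoch (N - k)) * (qpoch n * inv_qpoch (N + k)))))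
      ((- 1) ^ nat \<bar>k\<bar> * (fps_X ^ nat (k^2) * 1) :: 'a fps)"
    if k: "k \<in> {-N..N}" for k
  proof -
    define m where "m = n - nat \<bar>k\<bar>"
    have k0: "0 \<le> N - k" "0 \<le> N + k"
      using k by auto
    have "m \<le> min (nat (N - k)) n" "m \<le> min (nat (N + k)) n"
      using k0 unfolding m_def N_def by auto
    then have "agree_upto (m + 1) (qpoch n * inv_qpoch (N - k)) (1 :: 'a fps)"
      "agree_upto (m + 1) (qpoch n * inv_qpoch (N + k)) (1 :: 'a fps)"
      using k0 agree_upto_qpoch_ratio[of "nat (N - k)" n] agree_upto_qpoch_ratio[of "nat (N + k)" n]
      by (auto simp: inv_qpoch_def intro: agree_upto_mono)
    then have "agree_upto (m + 1) ((qpoch n * inv_qpoch (N - k)) * (qpoch n * inv_qpoch (N + k))) (1 :: 'a fps)"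
      using agree_upto_mult by fastforce
    then have "agree_upto (m + 1 + nat (k^2))
        (fps_X ^ nat (k^2) * ((qpoch n * inv_qpoch (N - k)) * (qpoch n * inv_qpoch (N + k))))
        (fps_X ^ nat (k^2) * 1 :: 'a fps)"
      by (rule agree_upto_shift)
    moreover have "n + 1 \<le> m + 1 + nat (k^2)"
      using abs_le_square[of k] k unfolding m_def N_def by (simp add: nat_le_eq_zle)
    ultimately have "agree_upto (n + 1)
        (fps_X ^ nat (k^2) * ((qpoch n * inv_qpoch (N - k)) * (qpoch n * inv_qpoch (N + k))))
        (fps_X ^ nat (k^2) * 1 :: 'a fps)"
      by (rule agree_upto_mono)
    then show ?thesis
      by (rule agree_upto_mult[OF agree_upto_refl])
  qed
  ultimately show ?thesis
    using agree_upto_sum[OF termwise, of "{-N..N}"] unfolding N_def by simp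
qed

lemma squares_gf_agree_upto:
  "agree_upto (n + 1) (squares_gf A) (\<Sum>k \<in> A \<inter> {-int n..int n}. fps_X ^ nat (k^2) :: 'a::comm_ring_1 fps)"
proof -
  define G where "G = {k\<in>A. nat (k^2) < n + 1}"
  define D where "D = A \<inter> {-int n..int n} - G"
  have sub: "G \<subseteq> A \<inter> {-int n..int n}"
  proof
    fix k
    assume "k \<in> G"
    then have "k \<in> A" "k^2 \<le> int n"
      by (auto simp: G_def)
    with abs_le_square[of k] show "k \<in> A \<inter> {-int n..int n}"
      by (auto simp: abs_le_iff)
  qed
  then have "finite G"
    by (rule finite_subset) simp
  then have "agree_upto (n + 1) (squares_gf A) (\<Sum>k\<in>G. fps_X ^ nat (k^2) :: 'a fps)"
    unfolding squares_gf_def G_def by (rule weight_gf_agree_upto)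
  moreover have "agree_upto (n + 1) (\<Sum>k\<in>D. fps_X ^ nat (k^2)) (\<Sum>k\<in>D. 0 :: 'a fps)"
    by (rule agree_upto_sum) (auto simp: D_def G_def not_less intro: agree_upto_X_power_0)
  ultimately have "agree_upto (n + 1) (squares_gf A + 0)
      ((\<Sum>k\<in>G. fps_X ^ nat (k^2)) + (\<Sum>k\<in>D. fps_X ^ nat (k^2)) :: 'a fps)"
    by (intro agree_upto_add) (auto intro: agree_upto_sym)
  then show ?thesis
    by (simp add: sum.subset_diff[OF sub] D_def add.commute)
qed

lemma agree_upto_phi_neg:
  "agree_upto (n + 1) (\<Sum>k = -int n..int n. (- 1) ^ nat \<bar>k\<bar> * fps_X ^ nat (k^2)) phi_neg"
proof -
  let ?I = "{-int n..int n}"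
  have sign: "(- 1) ^ nat \<bar>k\<bar> = (if even k then 1 else - 1 :: rat fps)" for k :: int
    by (simp add: even_nat_iff minus_one_power_iff)
  have "(\<Sum>k\<in>?I. (- 1) ^ nat \<bar>k\<bar> * fps_X ^ nat (k^2) :: rat fps)
      = (\<Sum>k\<in>?I. (if even k then fps_X ^ nat (k^2) else - (fps_X ^ nat (k^2))))"
    by (rule sum.cong) (auto simp: sign)
  also have "\<dots> = (\<Sum>k\<in>?I \<inter> {k. even k}. fps_X ^ nat (k^2))
      + (\<Sum>k\<in>?I \<inter> - {k. even k}. - (fps_X ^ nat (k^2)))"
    by (rule sum.If_cases) simp
  also have "\<dots> = (\<Sum>k\<in>{k. even k} \<inter> ?I. fps_X ^ nat (k^2))
      - (\<Sum>k\<in>{k. odd k} \<inter> ?I. fps_X ^ nat (k^2))"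
    by (simp add: sum_negf Int_commute Compl_eq)
  finally have partial: "(\<Sum>k\<in>?I. (- 1) ^ nat \<bar>k\<bar> * fps_X ^ nat (k^2) :: rat fps)
      = (\<Sum>k\<in>{k. even k} \<inter> ?I. fps_X ^ nat (k^2))
        - (\<Sum>k\<in>{k. odd k} \<inter> ?I. fps_X ^ nat (k^2))" .
  show ?thesis
    unfolding partial phi_neg_def
    by (rule agree_upto_diff; rule agree_upto_sym, rule squares_gf_agree_upto)
qed

lemma fk_agree_upto:
  assumes "1 \<le> k"
  shows "agree_upto (n + 1) (fk k) (\<Prod>m=1..n. 1 - fps_X ^ (m * k))"
proof (rule agree_uptoI)
  fix i
  assume i: "i < n + 1"
  have "{1..n} = {1..i} \<union> {i+1..n}" "{1..i} \<inter> {i+1..n} = {}"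
    using i by auto
  then have split: "(\<Prod>m=1..n. 1 - fps_X ^ (m * k) :: rat fps)
      = (\<Prod>m=1..i. 1 - fps_X ^ (m * k)) * (\<Prod>m=i+1..n. 1 - fps_X ^ (m * k))"
    by (simp add: prod.union_disjoint)
  have "agree_upto (i + 1) (\<Prod>m=i+1..n. 1 - fps_X ^ (m * k)) (\<Prod>m=i+1..n. 1 :: rat fps)"
    using assms
    by (intro agree_upto_prod agree_upto_one_minus_X_power)
      (auto intro: order.trans[OF _ mult_le_mono2[of 1]])
  then have "agree_upto (i + 1) (\<Prod>m=1..n. 1 - fps_X ^ (m * k)) (\<Prod>m=1..i. 1 - fps_X ^ (m * k) :: rat fps)"
    unfolding split using agree_upto_mult[OF agree_upto_refl] by fastforce
  then show "fk k $ i = (\<Prod>m=1..n. 1 - fps_X ^ (m * k)) $ i"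
    unfolding fk_def by (simp add: agree_upto_nth)
qed

lemma fk_compose_X2:
  assumes "1 \<le> k"
  shows "fk k oo fps_X ^ 2 = fk (2 * k)"
proof (rule fps_eq_if_agree_upto)
  fix n
  have "agree_upto (n + 1) (fk k oo fps_X ^ 2) ((\<Prod>m=1..n. 1 - fps_X ^ (m * k)) oo fps_X ^ 2)"
    by (rule agree_upto_compose_X2[OF fk_agree_upto[OF assms]])
  also have "(\<Prod>m=1..n. 1 - fps_X ^ (m * k)) oo fps_X ^ 2 = (\<Prod>m=1..n. 1 - fps_X ^ (m * (2 * k)) :: rat fps)"
    by (simp add: fps_compose_prod_distrib fps_compose_X2_simps fps_compose_power power_mult[symmetric]
        ac_simps)
  finally have "agree_upto (n + 1) (fk k oo fps_X ^ 2) (fk (2 * k))"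
    using agree_upto_sym[OF fk_agree_upto[of "2 * k" n]] assms by (auto intro: agree_upto_trans)
  then show "agree_upto n (fk k oo fps_X ^ 2) (fk (2 * k))"
    by (rule agree_upto_mono) simp
qed

lemma gauss_identity: "fk 1 ^ 2 = fk 2 * phi_neg"
proof (rule fps_eq_if_agree_upto)
  fix n
  let ?P = "\<Prod>j=1..n. 1 - fps_X ^ (2 * j) :: rat fps"
  have fk1: "agree_upto (n + 1) (fk 1) (qpoch n)"
    using fk_agree_upto[of 1 n] by (simp add: qpoch_def)
  have fk2: "agree_upto (n + 1) (fk 2) ?P"
    using fk_agree_upto[of 2 n] by (simp add: mult.commute)
  have "agree_upto (n + 1) (qpoch n * qpoch n * gauss_sum n) phi_neg"
    by (rule agree_upto_trans[OF agree_upto_qpoch_gauss_sum agree_upto_phi_neg])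
  then have "agree_upto (n + 1) (qpoch n * qpoch n * gauss_sum n * ?P) (phi_neg * fk 2)"
    using fk2 by (rule agree_upto_mult[OF _ agree_upto_sym])
  then have "agree_upto (n + 1) (qpoch n * qpoch n) (phi_neg * fk 2)"
    by (simp only: mult.assoc gauss_sum_mult_prod mult_1_right)
  moreover have "agree_upto (n + 1) (fk 1 ^ 2) (qpoch n * qpoch n)"
    unfolding power2_eq_square by (rule agree_upto_mult[OF fk1 fk1])
  ultimately have "agree_upto (n + 1) (fk 1 ^ 2) (fk 2 * phi_neg)"
    by (simp add: mult.commute agree_upto_trans)
  then show "agree_upto n (fk 1 ^ 2) (fk 2 * phi_neg)"
    by (rule agree_upto_mono) simp
qed

lemma btbar_gf_eq: "btbar_gf = inverse ((phi_neg * (phi_neg oo fps_X ^ 2)) ^ 3)"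
proof -
  have fk2: "fk 2 = fk 1 oo fps_X ^ 2" and fk4: "fk 4 = fk 2 oo fps_X ^ 2"
    using fk_compose_X2[of 1] fk_compose_X2[of 2] by simp_all
  have "fk 2 ^ 2 = fk 4 * (phi_neg oo fps_X ^ 2)"
    using arg_cong[OF gauss_identity, of "\<lambda>f. f oo fps_X ^ 2"]
    by (simp only: fps_compose_X2_simps fk2 fk4)
  with gauss_identity have "fk 1 ^ 6 * fk 2 ^ 3 = fk 4 ^ 3 * (phi_neg * (phi_neg oo fps_X ^ 2)) ^ 3"
    by algebra
  moreover have "(fk 4 ^ 3) $ 0 \<noteq> 0"
    by (simp add: fps_nth_power_0 fk_def)
  ultimately show ?thesis
    unfolding btbar_gf_def by (simp add: fps_inverse_mult mult.assoc[symmetric] inverse_mult_eq_1')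
qed

section \<open>Congruences between power series with integer coefficients\<close>

definition int_coeffs :: "'a::comm_ring_1 fps \<Rightarrow> bool" where
  "int_coeffs f \<longleftrightarrow> (\<forall>n. f $ n \<in> \<int>)"

lemma int_coeffs_add: "int_coeffs f \<Longrightarrow> int_coeffs g \<Longrightarrow> int_coeffs (f + g)"
  unfolding int_coeffs_def by simp

lemma int_coeffs_diff: "int_coeffs f \<Longrightarrow> int_coeffs g \<Longrightarrow> int_coeffs (f - g)"
  unfolding int_coeffs_def by simp

lemma int_coeffs_uminus: "int_coeffs f \<Longrightarrow> int_coeffs (- f)"
  unfolding int_coeffs_def by simp

lemma int_coeffs_mult: "int_coeffs f \<Longrightarrow> int_coeffs g \<Longrightarrow> int_coeffs (f * g)"
  unfolding int_coeffs_def fps_mult_nth by (auto intro!: Ints_sum Ints_mult)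

lemma int_coeffs_1: "int_coeffs 1"
  unfolding int_coeffs_def by (simp add: fps_one_nth)

lemma int_coeffs_numeral: "int_coeffs (numeral k)"
  unfolding int_coeffs_def by (simp add: fps_numeral_nth)

lemma int_coeffs_power: "int_coeffs f \<Longrightarrow> int_coeffs (f ^ k)"
  by (induction k) (simp_all add: int_coeffs_1 int_coeffs_mult)

lemma int_coeffs_weight_gf: "int_coeffs (weight_gf A w)"
  unfolding int_coeffs_def weight_gf_nth by simp

lemma int_coeffs_compose_X2: "int_coeffs f \<Longrightarrow> int_coeffs (f oo fps_X ^ 2)"
  unfolding int_coeffs_def fps_compose_X2_nth by simp

lemma int_coeffs_U2: "int_coeffs f \<Longrightarrow> int_coeffs (U2 f)"
  unfolding int_coeffs_def by simp

lemmas int_coeffs_intros = int_coeffs_add int_coeffs_diff int_coeffs_uminus int_coeffs_mult int_coeffs_1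
  int_coeffs_numeral int_coeffs_power

lemma int_coeffs_inverse:
  fixes g :: "'a::field fps"
  assumes "int_coeffs g" "g $ 0 = 1"
  shows "int_coeffs (inverse g)"
proof -
  have "inverse g $ n \<in> \<int>" for n
  proof (induction n rule: less_induct)
    case (less n)
    show ?case
    proof (cases n)
      case (Suc m)
      have "(inverse g * g) $ n = 0"
        using assms(2) Suc by (simp add: inverse_mult_eq_1)
      then have "inverse g $ n = - (\<Sum>i=0..m. inverse g $ i * g $ (n - i))"
        using assms(2) Suc by (simp add: fps_mult_nth sum.atLeast0_atMost_Suc eq_neg_iff_add_eq_0 add.commute)
      moreover have "(\<Sum>i=0..m. inverse g $ i * g $ (n - i)) \<in> \<int>"
        using less Suc assms(1) unfolding int_coeffs_def by (intro Ints_sum Ints_mult) auto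
      ultimately show ?thesis
        by simp
    qed (use assms(2) in simp)
  qed
  then show ?thesis
    unfolding int_coeffs_def by simp
qed

definition fps_cong :: "int \<Rightarrow> 'a::comm_ring_1 fps \<Rightarrow> 'a fps \<Rightarrow> bool" where
  "fps_cong m f g \<longleftrightarrow> (\<exists>h. int_coeffs h \<and> f - g = of_int m * h)"

lemma fps_congI: "f = g + of_int m * h \<Longrightarrow> int_coeffs h \<Longrightarrow> fps_cong m f g"
  unfolding fps_cong_def by auto

lemma fps_cong_sym: "fps_cong m f g \<Longrightarrow> fps_cong m g f"
proof -
  assume "fps_cong m f g"
  then obtain h where "int_coeffs h" "f - g = of_int m * h"
    unfolding fps_cong_def by blast
  then have "g = f + of_int m * (- h)" "int_coeffs (- h)"
    by (simp_all add: algebra_simps int_coeffs_uminus)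
  then show ?thesis
    by (rule fps_congI)
qed

lemma fps_cong_trans: "fps_cong m f g \<Longrightarrow> fps_cong m g h \<Longrightarrow> fps_cong m f h"
proof -
  assume "fps_cong m f g" "fps_cong m g h"
  then obtain a b where "int_coeffs a" "f - g = of_int m * a" "int_coeffs b" "g - h = of_int m * b"
    unfolding fps_cong_def by blast
  then have "f = h + of_int m * (a + b)" "int_coeffs (a + b)"
    by (simp_all add: algebra_simps int_coeffs_add)
  then show ?thesis
    by (rule fps_congI)
qed

lemma fps_cong_mult:
  assumes "fps_cong m f g" "fps_cong m f' g'" "int_coeffs f" "int_coeffs g'"
  shows "fps_cong m (f * f') (g * g')"
proof -
  obtain h h' where h: "int_coeffs h" "f - g = of_int m * h"
    and h': "int_coeffs h'" "f' - g' = of_int m * h'"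
    using assms(1,2) unfolding fps_cong_def by blast
  have "f * f' - g * g' = (f - g) * g' + f * (f' - g')"
    by (simp add: algebra_simps)
  also have "\<dots> = of_int m * h * g' + f * (of_int m * h')"
    by (simp only: h(2) h'(2))
  also have "\<dots> = of_int m * (h * g' + f * h')"
    by (simp add: algebra_simps)
  finally have "f * f' - g * g' = of_int m * (h * g' + f * h')" .
  moreover have "int_coeffs (h * g' + f * h')"
    using h(1) h'(1) assms(3,4) by (simp add: int_coeffs_add int_coeffs_mult)
  ultimately show ?thesis
    unfolding fps_cong_def by blast
qed

lemma fps_cong_inverse:
  assumes "f * u = 1" "fps_cong m (u * v) 1" "int_coeffs f"
  shows "fps_cong m f v"
proof -
  obtain h where h: "int_coeffs h" "u * v - 1 = of_int m * h"
    using assms(2) unfolding fps_cong_def by blast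
  have "f - v = - (f * (u * v - 1))"
    using assms(1) by (simp add: algebra_simps flip: mult.assoc)
  also have "\<dots> = of_int m * (- (f * h))"
    by (simp add: h(2) algebra_simps)
  finally show ?thesis
    unfolding fps_cong_def using h(1) assms(3) by (blast intro: int_coeffs_uminus int_coeffs_mult)
qed

lemma fps_cong_U2: "fps_cong m f g \<Longrightarrow> fps_cong m (U2 f) (U2 g)"
proof -
  assume "fps_cong m f g"
  then obtain h where h: "int_coeffs h" "f - g = of_int m * h"
    unfolding fps_cong_def by blast
  have "U2 f - U2 g = U2 (of_int m * h)"
    by (simp only: U2_diff[symmetric] h(2))
  also have "\<dots> = of_int m * U2 h"
    by (rule fps_ext) (simp add: fps_of_int)
  finally show ?thesis
    unfolding fps_cong_def using h(1) int_coeffs_U2 by blast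
qed

lemma fps_cong_nth:
  assumes "fps_cong m f g"
  shows "\<exists>k. f $ n - g $ n = of_int (m * k)"
proof -
  obtain h where "int_coeffs h" "f - g = of_int m * h"
    using assms unfolding fps_cong_def by blast
  moreover from this obtain k where "h $ n = of_int k"
    unfolding int_coeffs_def by (meson Ints_cases)
  ultimately have "f $ n - g $ n = of_int m * of_int k"
    by (simp add: fps_of_int flip: fps_sub_nth)
  then show ?thesis
    by auto
qed

section \<open>The 2-dissection modulo 64\<close>

text \<open>The expansion \<open>(1 + 2x)^(-3) = \<Sum>k. (k + 2 choose 2) (-2x)^k\<close>, truncated and
  reduced modulo 64.\<close>

definition inv_cube_mod64 :: "'a::comm_ring_1 \<Rightarrow> 'a" where
  "inv_cube_mod64 x = 1 + 58 * x + 24 * x^2 + 48 * x^3 + 48 * x^4 + 32 * x^5"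

lemma inv_cube_mod64_cong:
  fixes x :: "'a::idom fps"
  assumes "int_coeffs x"
  shows "fps_cong 64 ((1 + 2 * x) ^ 3 * inv_cube_mod64 x) 1"
  by (rule fps_congI[where
        h = "x + 6 * x^2 + 14 * x^3 + 17 * x^4 + 17 * x^5 + 18 * x^6 + 12 * x^7 + 4 * x^8"])
    (unfold inv_cube_mod64_def of_int_numeral, algebra, intro int_coeffs_intros assms)

text \<open>\<open>A\<^sub>k x y z + w B\<^sub>k x y z\<close> at \<open>(x, y, z, w) = (S2, S4, S8, Sodd)\<close> is congruent
  to \<open>U\<^sub>2\<^sup>k\<close> of the generating function modulo 64, with \<open>B3\<close> in place of
  \<open>B2\<close> for \<open>k = 3\<close>. Coefficients are reduced modulo 64; \<open>A2\<close> reproduces itself.\<close>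

definition A0 :: "'a::comm_ring_1 \<Rightarrow> 'a \<Rightarrow> 'a \<Rightarrow> 'a" where
  "A0 x y z =
    1 + 28 * z + 58 * y + 56 * y * z + 24 * y^2 + 48 * y^3 + 48 * y^4 + 32 * y^5 + 30 * x
    + 44 * x * y + 48 * x * y^2 + 32 * x * y^3 + 32 * x * y^4 + 24 * x^2 + 48 * x^2 * y
    + 48 * x^3 + 32 * x^3 * y + 48 * x^4 + 32 * x^4 * y + 32 * x^5"

definition B0 :: "'a::comm_ring_1 \<Rightarrow> 'a \<Rightarrow> 'a \<Rightarrow> 'a" where
  "B0 x y z =
    6 + 40 * z + 16 * y + 48 * y^2 + 32 * y^4 + 52 * x + 32 * x * y + 32 * x * y^2 + 16 * x^2
    + 32 * x^3 + 32 * x^4"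

definition A1 :: "'a::comm_ring_1 \<Rightarrow> 'a \<Rightarrow> 'a \<Rightarrow> 'a" where
  "A1 x y z =
    1 + 40 * z + 58 * y + 48 * y * z + 24 * y^2 + 32 * y^2 * z + 48 * y^3 + 48 * y^4 + 32 * y^5
    + 18 * x + 32 * x * z + 52 * x * y + 16 * x * y^2 + 32 * x * y^3 + 32 * x * y^4 + 56 * x^2
    + 32 * x^2 * z + 48 * x^2 * y + 16 * x^3 + 32 * x^3 * y + 48 * x^4 + 32 * x^4 * y + 32 * x^5"

definition B1 :: "'a::comm_ring_1 \<Rightarrow> 'a \<Rightarrow> 'a \<Rightarrow> 'a" where
  "B1 x y z =
    30 + 16 * z + 48 * y + 16 * y^2 + 32 * y^4 + 28 * x + 32 * x * y + 32 * x * y^2 + 48 * x^2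
    + 32 * x^3 + 32 * x^4"

definition A2 :: "'a::comm_ring_1 \<Rightarrow> 'a \<Rightarrow> 'a \<Rightarrow> 'a" where
  "A2 x y z =
    1 + 8 * z + 58 * y + 48 * y * z + 24 * y^2 + 32 * y^2 * z + 48 * y^3 + 48 * y^4 + 32 * y^5
    + 50 * x + 32 * x * z + 52 * x * y + 16 * x * y^2 + 32 * x * y^3 + 32 * x * y^4 + 56 * x^2
    + 32 * x^2 * z + 48 * x^2 * y + 16 * x^3 + 32 * x^3 * y + 48 * x^4 + 32 * x^4 * y + 32 * x^5"

definition B2 :: "'a::comm_ring_1 \<Rightarrow> 'a \<Rightarrow> 'a \<Rightarrow> 'a" where
  "B2 x y z =
    18 + 48 * z + 16 * y + 48 * y^2 + 32 * y^4 + 4 * x + 32 * x * y + 32 * x * y^2 + 16 * x^2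
    + 32 * x^3 + 32 * x^4"

definition B3 :: "'a::comm_ring_1 \<Rightarrow> 'a \<Rightarrow> 'a \<Rightarrow> 'a" where
  "B3 x y z =
    50 + 48 * z + 16 * y + 48 * y^2 + 32 * y^4 + 4 * x + 32 * x * y + 32 * x * y^2 + 16 * x^2
    + 32 * x^3 + 32 * x^4"

lemma dissection_polys_compose_X2:
  fixes x y z :: "'a::idom fps"
  shows "A0 x y z oo fps_X ^ 2 = A0 (x oo fps_X ^ 2) (y oo fps_X ^ 2) (z oo fps_X ^ 2)"
    and "B0 x y z oo fps_X ^ 2 = B0 (x oo fps_X ^ 2) (y oo fps_X ^ 2) (z oo fps_X ^ 2)"
    and "A1 x y z oo fps_X ^ 2 = A1 (x oo fps_X ^ 2) (y oo fps_X ^ 2) (z oo fps_X ^ 2)"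
    and "B1 x y z oo fps_X ^ 2 = B1 (x oo fps_X ^ 2) (y oo fps_X ^ 2) (z oo fps_X ^ 2)"
    and "A2 x y z oo fps_X ^ 2 = A2 (x oo fps_X ^ 2) (y oo fps_X ^ 2) (z oo fps_X ^ 2)"
    and "B2 x y z oo fps_X ^ 2 = B2 (x oo fps_X ^ 2) (y oo fps_X ^ 2) (z oo fps_X ^ 2)"
    and "B3 x y z oo fps_X ^ 2 = B3 (x oo fps_X ^ 2) (y oo fps_X ^ 2) (z oo fps_X ^ 2)"
  unfolding A0_def B0_def A1_def B1_def A2_def B2_def B3_def by (simp_all only: fps_compose_X2_simps)

text \<open>The cofactors \<open>h\<close> below were computed with computer algebra.\<close>

lemma inv_cube_mod64_dissection:
  fixes x y z w :: "'a::idom fps"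
  assumes ints: "int_coeffs x" "int_coeffs y" "int_coeffs z" "int_coeffs w"
    and rel: "w^2 = (1 + 2 * z) * (x - z)"
  shows "fps_cong 64 (inv_cube_mod64 (y - w) * inv_cube_mod64 (2 * z - x)) (A0 x y z + w * B0 x y z)"
  by (rule fps_congI[where h = "
      z - 42 * z^2 - 27 * z^3 + 219 * z^4 + 364 * z^5 + 1056 * z^6 + 3456 * z^7 + 5376 * z^8
      + 3072 * z^9 + 102 * y * z - 176 * y * z^2 - 90 * y * z^3 + 810 * y * z^4 + 552 * y * z^5
      + 960 * y * z^6 + 9472 * y * z^7 + 17920 * y * z^8 + 10240 * y * z^9 + 39 * y^2 * z
      - 495 * y^2 * z^2 - 1332 * y^2 * z^3 - 2304 * y^2 * z^4 - 6528 * y^2 * z^5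
      - 11520 * y^2 * z^6 - 9216 * y^2 * z^7 + 82 * y^3 * z - 518 * y^3 * z^2 - 1352 * y^3 * z^3
      - 2304 * y^3 * z^4 - 6912 * y^3 * z^5 - 12800 * y^3 * z^6 - 10240 * y^3 * z^7
      + 87 * y^4 * z + 72 * y^4 * z^2 + 288 * y^4 * z^3 + 576 * y^4 * z^4 + 768 * y^4 * z^5
      + 58 * y^5 * z + 48 * y^5 * z^2 + 192 * y^5 * z^3 + 384 * y^5 * z^4 + 512 * y^5 * z^5 - x
      + 63 * x * z - 30 * x * z^2 - 612 * x * z^3 - 1198 * x * z^4 - 4128 * x * z^5
      - 14016 * x * z^6 - 23040 * x * z^7 - 13824 * x * z^8 - 51 * x * y + 304 * x * y * z
      - 52 * x * y * z^2 - 2008 * x * y * z^3 - 1956 * x * y * z^4 - 5568 * x * y * z^5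
      - 39552 * x * y * z^6 - 76800 * x * y * z^7 - 46080 * x * y * z^8 - 18 * x * y^2
      + 756 * x * y^2 * z + 2214 * x * y^2 * z^2 + 5472 * x * y^2 * z^3 + 18048 * x * y^2 * z^4
      + 36864 * x * y^2 * z^5 + 32256 * x * y^2 * z^6 - 39 * x * y^3 + 808 * x * y^3 * z
      + 2268 * x * y^3 * z^2 + 5568 * x * y^3 * z^3 + 19200 * x * y^3 * z^4
      + 40960 * x * y^3 * z^5 + 35840 * x * y^3 * z^6 - 44 * x * y^4 - 72 * x * y^4 * z
      - 432 * x * y^4 * z^2 - 1152 * x * y^4 * z^3 - 1920 * x * y^4 * z^4 - 29 * x * y^5
      - 48 * x * y^5 * z - 288 * x * y^5 * z^2 - 768 * x * y^5 * z^3 - 1280 * x * y^5 * z^4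
      - 21 * x^2 + 93 * x^2 * z + 537 * x^2 * z^2 + 1384 * x^2 * z^3 + 6216 * x^2 * z^4
      + 23136 * x^2 * z^5 + 41088 * x^2 * z^6 + 26112 * x^2 * z^7 - 107 * x^2 * y
      + 320 * x^2 * y * z + 1670 * x^2 * y * z^2 + 2384 * x^2 * y * z^3 + 10224 * x^2 * y * z^4
      + 66880 * x^2 * y * z^5 + 136960 * x^2 * y * z^6 + 87040 * x^2 * y * z^7 - 252 * x^2 * y^2
      - 954 * x^2 * y^2 * z - 4536 * x^2 * y^2 * z^2 - 18912 * x^2 * y^2 * z^3
      - 47232 * x^2 * y^2 * z^4 - 46080 * x^2 * y^2 * z^5 - 272 * x^2 * y^3
      - 964 * x^2 * y^3 * z - 4656 * x^2 * y^3 * z^2 - 20160 * x^2 * y^3 * z^3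
      - 52480 * x^2 * y^3 * z^4 - 51200 * x^2 * y^3 * z^5 + 18 * x^2 * y^4 + 216 * x^2 * y^4 * z
      + 864 * x^2 * y^4 * z^2 + 1920 * x^2 * y^4 * z^3 + 12 * x^2 * y^5 + 144 * x^2 * y^5 * z
      + 576 * x^2 * y^5 * z^2 + 1280 * x^2 * y^5 * z^3 - 36 * x^3 - 144 * x^3 * z
      - 698 * x^3 * z^2 - 4608 * x^3 * z^3 - 20112 * x^3 * z^4 - 39552 * x^3 * z^5
      - 26880 * x^3 * z^6 - 135 * x^3 * y - 424 * x^3 * y * z - 1212 * x^3 * y * z^2
      - 8448 * x^3 * y * z^3 - 59360 * x^3 * y * z^4 - 131840 * x^3 * y * z^5
      - 89600 * x^3 * y * z^6 + 90 * x^3 * y^2 + 1584 * x^3 * y^2 * z + 9456 * x^3 * y^2 * z^2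
      + 31104 * x^3 * y^2 * z^3 + 34560 * x^3 * y^2 * z^4 + 84 * x^3 * y^3
      + 1632 * x^3 * y^3 * z + 10080 * x^3 * y^3 * z^2 + 34560 * x^3 * y^3 * z^3
      + 38400 * x^3 * y^3 * z^4 - 36 * x^3 * y^4 - 288 * x^3 * y^4 * z - 960 * x^3 * y^4 * z^2
      - 24 * x^3 * y^5 - 192 * x^3 * y^5 * z - 640 * x^3 * y^5 * z^2 + 167 * x^4 * z
      + 1776 * x^4 * z^2 + 9936 * x^4 * z^3 + 22224 * x^4 * z^4 + 16320 * x^4 * z^5
      - 5 * x^4 * y + 302 * x^4 * y * z + 3456 * x^4 * y * z^2 + 29920 * x^4 * y * z^3
      + 74080 * x^4 * y * z^4 + 54400 * x^4 * y * z^5 - 198 * x^4 * y^2 - 2256 * x^4 * y^2 * z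
      - 11088 * x^4 * y^2 * z^2 - 14400 * x^4 * y^2 * z^3 - 204 * x^4 * y^3
      - 2400 * x^4 * y^3 * z - 12320 * x^4 * y^3 * z^2 - 16000 * x^4 * y^3 * z^3
      + 36 * x^4 * y^4 + 240 * x^4 * y^4 * z + 24 * x^4 * y^5 + 160 * x^4 * y^5 * z - 19 * x^5
      - 336 * x^5 * z - 2784 * x^5 * z^2 - 7296 * x^5 * z^3 - 5856 * x^5 * z^4 - 41 * x^5 * y
      - 672 * x^5 * y * z - 8576 * x^5 * y * z^2 - 24320 * x^5 * y * z^3 - 19520 * x^5 * y * z^4
      + 204 * x^5 * y^2 + 2016 * x^5 * y^2 * z + 3168 * x^5 * y^2 * z^2 + 216 * x^5 * y^3
      + 2240 * x^5 * y^3 * z + 3520 * x^5 * y^3 * z^2 - 24 * x^5 * y^4 - 16 * x^5 * y^5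
      + 24 * x^6 + 408 * x^6 * z + 1296 * x^6 * z^2 + 1152 * x^6 * z^3 + 48 * x^6 * y
      + 1296 * x^6 * y * z + 4320 * x^6 * y * z^2 + 3840 * x^6 * y * z^3 - 144 * x^6 * y^2
      - 288 * x^6 * y^2 * z - 160 * x^6 * y^3 - 320 * x^6 * y^3 * z - 24 * x^7 - 96 * x^7 * z
      - 96 * x^7 * z^2 - 80 * x^7 * y - 320 * x^7 * y * z - 320 * x^7 * y * z^2 - w
      - 105 * w * z + w * z^2 - 162 * w * z^3 - 546 * w * z^4 - 392 * w * z^5 + 576 * w * z^6
      - 1280 * w * z^7 - 3584 * w * z^8 - 2048 * w * z^9 - w * y - 84 * w * y * z
      + 282 * w * y * z^2 + 696 * w * y * z^3 + 1152 * w * y * z^4 + 3840 * w * y * z^5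
      + 7680 * w * y * z^6 + 6144 * w * y * z^7 - 3 * w * y^2 - 256 * w * y^2 * z
      + 374 * w * y^2 * z^2 + 776 * w * y^2 * z^3 + 1152 * w * y^2 * z^4 + 5376 * w * y^2 * z^5
      + 12800 * w * y^2 * z^6 + 10240 * w * y^2 * z^7 - 3 * w * y^3 - 348 * w * y^3 * z
      - 288 * w * y^3 * z^2 - 1152 * w * y^3 * z^3 - 2304 * w * y^3 * z^4 - 3072 * w * y^3 * z^5
      - 3 * w * y^4 - 290 * w * y^4 * z - 240 * w * y^4 * z^2 - 960 * w * y^4 * z^3
      - 1920 * w * y^4 * z^4 - 2560 * w * y^4 * z^5 + 51 * w * x - 44 * w * x * z
      + 266 * w * x * z^2 + 1112 * w * x * z^3 + 980 * w * x * z^4 - 1344 * w * x * z^5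
      + 5760 * w * x * z^6 + 15360 * w * x * z^7 + 9216 * w * x * z^8 + 40 * w * x * y
      - 456 * w * x * y * z - 1188 * w * x * y * z^2 - 2880 * w * x * y * z^3
      - 10752 * w * x * y * z^4 - 24576 * w * x * y * z^5 - 21504 * w * x * y * z^6
      + 125 * w * x * y^2 - 664 * w * x * y^2 * z - 1404 * w * x * y^2 * z^2
      - 3264 * w * x * y^2 * z^3 - 15360 * w * x * y^2 * z^4 - 40960 * w * x * y^2 * z^5
      - 35840 * w * x * y^2 * z^6 + 174 * w * x * y^3 + 288 * w * x * y^3 * z
      + 1728 * w * x * y^3 * z^2 + 4608 * w * x * y^3 * z^3 + 7680 * w * x * y^3 * z^4
      + 145 * w * x * y^4 + 240 * w * x * y^4 * z + 1440 * w * x * y^4 * z^2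
      + 3840 * w * x * y^4 * z^3 + 6400 * w * x * y^4 * z^4 + 21 * w * x^2 - 202 * w * x^2 * z
      - 838 * w * x^2 * z^2 - 1008 * w * x^2 * z^3 + 1104 * w * x^2 * z^4
      - 10304 * w * x^2 * z^5 - 27392 * w * x^2 * z^6 - 17408 * w * x^2 * z^7
      + 156 * w * x^2 * y + 492 * w * x^2 * y * z + 2448 * w * x^2 * y * z^2
      + 11328 * w * x^2 * y * z^3 + 31488 * w * x^2 * y * z^4 + 30720 * w * x^2 * y * z^5
      + 236 * w * x^2 * y^2 + 532 * w * x^2 * y^2 * z + 2928 * w * x^2 * y^2 * z^2
      + 16320 * w * x^2 * y^2 * z^3 + 52480 * w * x^2 * y^2 * z^4 + 51200 * w * x^2 * y^2 * z^5
      - 72 * w * x^2 * y^3 - 864 * w * x^2 * y^3 * z - 3456 * w * x^2 * y^3 * z^2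
      - 7680 * w * x^2 * y^3 * z^3 - 60 * w * x^2 * y^4 - 720 * w * x^2 * y^4 * z
      - 2880 * w * x^2 * y^4 * z^2 - 6400 * w * x^2 * y^4 * z^3 + 54 * w * x^3
      + 248 * w * x^3 * z + 508 * w * x^3 * z^2 - 384 * w * x^3 * z^3 + 9568 * w * x^3 * z^4
      + 26368 * w * x^3 * z^5 + 17920 * w * x^3 * z^6 - 36 * w * x^3 * y - 864 * w * x^3 * y * z
      - 5664 * w * x^3 * y * z^2 - 20736 * w * x^3 * y * z^3 - 23040 * w * x^3 * y * z^4
      - 12 * w * x^3 * y^2 - 1056 * w * x^3 * y^2 * z - 8160 * w * x^3 * y^2 * z^2
      - 34560 * w * x^3 * y^2 * z^3 - 38400 * w * x^3 * y^2 * z^4 + 144 * w * x^3 * y^3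
      + 1152 * w * x^3 * y^3 * z + 3840 * w * x^3 * y^3 * z^2 + 120 * w * x^3 * y^4
      + 960 * w * x^3 * y^4 * z + 3200 * w * x^3 * y^4 * z^2 - 20 * w * x^4 - 134 * w * x^4 * z
      + 48 * w * x^4 * z^2 - 5024 * w * x^4 * z^3 - 14816 * w * x^4 * z^4
      - 10880 * w * x^4 * z^5 + 108 * w * x^4 * y + 1344 * w * x^4 * y * z
      + 7392 * w * x^4 * y * z^2 + 9600 * w * x^4 * y * z^3 + 132 * w * x^4 * y^2
      + 1920 * w * x^4 * y^2 * z + 12320 * w * x^4 * y^2 * z^2 + 16000 * w * x^4 * y^2 * z^3
      - 144 * w * x^4 * y^3 - 960 * w * x^4 * y^3 * z - 120 * w * x^4 * y^4
      - 800 * w * x^4 * y^4 * z + 17 * w * x^5 + 1504 * w * x^5 * z^2 + 4864 * w * x^5 * z^3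
      + 3904 * w * x^5 * z^4 - 120 * w * x^5 * y - 1344 * w * x^5 * y * z
      - 2112 * w * x^5 * y * z^2 - 168 * w * x^5 * y^2 - 2240 * w * x^5 * y^2 * z
      - 3520 * w * x^5 * y^2 * z^2 + 96 * w * x^5 * y^3 + 80 * w * x^5 * y^4 - 240 * w * x^6 * z
      - 864 * w * x^6 * z^2 - 768 * w * x^6 * z^3 + 96 * w * x^6 * y + 192 * w * x^6 * y * z
      + 160 * w * x^6 * y^2 + 320 * w * x^6 * y^2 * z + 16 * w * x^7 + 64 * w * x^7 * z
      + 64 * w * x^7 * z^2"])
    (use rel in \<open>unfold inv_cube_mod64_def A0_def B0_def of_int_numeral, algebra\<close>,
      intro int_coeffs_intros ints)

lemma A0_dissection:
  fixes x y z w :: "'a::idom fps"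
  assumes ints: "int_coeffs x" "int_coeffs y" "int_coeffs z" "int_coeffs w"
    and rel: "w^2 = (1 + 2 * z) * (x - z)"
  shows "fps_cong 64 (A0 (y + w) x y) (A1 x y z + w * B1 x y z)"
  by (rule fps_congI[where h = "
      - z + 3 * z^3 + 3 * z^4 - 3 * y * z - 2 * y * z^2 + 10 * y * z^3 + 10 * y * z^4
      - 5 * y^2 * z - 9 * y^2 * z^2 - 5 * y^3 * z - 10 * y^3 * z^2 + x - 2 * x * z - 7 * x * z^2
      - 4 * x * z^3 + 2 * x * z^4 + 3 * x * y - 2 * x * y * z - 23 * x * y * z^2
      - 20 * x * y * z^3 + 5 * x * y^2 + 6 * x * y^2 * z - 6 * x * y^2 * z^2 + 5 * x * y^3
      + 10 * x * y^3 * z + x^2 + 3 * x^2 * z - x^2 * z^2 - 4 * x^2 * z^3 + 4 * x^2 * y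
      + 13 * x^2 * y * z + 10 * x^2 * y * z^2 + 3 * x^2 * y^2 + 6 * x^2 * y^2 * z + x^3
      + 2 * x^3 * z + 2 * x^3 * z^2 - w * z - w * z^2 + 2 * w * z^3 + 2 * w * z^4
      - 3 * w * y * z - 6 * w * y * z^2 + 2 * w * y^2 - 5 * w * y^2 * z - 10 * w * y^2 * z^2
      + 3 * w * y^3 + 2 * w * y^4 + w * x - 5 * w * x * z^2 - 4 * w * x * z^3 + 4 * w * x * y
      + 4 * w * x * y * z - 4 * w * x * y * z^2 + 6 * w * x * y^2 + 10 * w * x * y^2 * z
      + 2 * w * x * y^3 + w * x^2 + 3 * w * x^2 * z + 2 * w * x^2 * z^2 + 2 * w * x^2 * y
      + 4 * w * x^2 * y * z"])
    (use rel in \<open>unfold A0_def A1_def B1_def of_int_numeral, algebra\<close>,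
      intro int_coeffs_intros ints)

lemma A1_dissection:
  fixes x y z w :: "'a::idom fps"
  assumes ints: "int_coeffs x" "int_coeffs y" "int_coeffs z" "int_coeffs w"
    and rel: "w^2 = (1 + 2 * z) * (x - z)"
  shows "fps_cong 64 (A1 (y + w) x y) (A2 x y z + w * B2 x y z)"
  by (rule fps_congI[where h = "
      - z - z^2 + 3 * z^3 + 3 * z^4 - 2 * y * z + 10 * y * z^3 + 10 * y * z^4 + y^2
      - 5 * y^2 * z - 9 * y^2 * z^2 - 5 * y^3 * z - 10 * y^3 * z^2 + x - x * z - 7 * x * z^2
      - 4 * x * z^3 + 2 * x * z^4 + 2 * x * y - 4 * x * y * z - 23 * x * y * z^2
      - 20 * x * y * z^3 + 5 * x * y^2 + 6 * x * y^2 * z - 6 * x * y^2 * z^2 + 5 * x * y^3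
      + 10 * x * y^3 * z + x^2 + 3 * x^2 * z - x^2 * z^2 - 4 * x^2 * z^3 + 4 * x^2 * y
      + 13 * x^2 * y * z + 10 * x^2 * y * z^2 + 3 * x^2 * y^2 + 6 * x^2 * y^2 * z + x^3
      + 2 * x^3 * z + 2 * x^3 * z^2 - w * z + 2 * w * z^3 + 2 * w * z^4 + 2 * w * y
      - 3 * w * y * z - 6 * w * y * z^2 + w * y^2 - 5 * w * y^2 * z - 10 * w * y^2 * z^2
      + 3 * w * y^3 + 2 * w * y^4 + w * x - w * x * z - 5 * w * x * z^2 - 4 * w * x * z^3
      + 4 * w * x * y + 4 * w * x * y * z - 4 * w * x * y * z^2 + 6 * w * x * y^2
      + 10 * w * x * y^2 * z + 2 * w * x * y^3 + w * x^2 + 3 * w * x^2 * z + 2 * w * x^2 * z^2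
      + 2 * w * x^2 * y + 4 * w * x^2 * y * z"])
    (use rel in \<open>unfold A1_def A2_def B2_def of_int_numeral, algebra\<close>,
      intro int_coeffs_intros ints)

lemma A2_dissection:
  fixes x y z w :: "'a::idom fps"
  assumes ints: "int_coeffs x" "int_coeffs y" "int_coeffs z" "int_coeffs w"
    and rel: "w^2 = (1 + 2 * z) * (x - z)"
  shows "fps_cong 64 (A2 (y + w) x y) (A2 x y z + w * B3 x y z)"
  by (rule fps_congI[where h = "
      - z - z^2 + 3 * z^3 + 3 * z^4 - 2 * y * z + 10 * y * z^3 + 10 * y * z^4 + y^2
      - 5 * y^2 * z - 9 * y^2 * z^2 - 5 * y^3 * z - 10 * y^3 * z^2 + x - x * z - 7 * x * z^2
      - 4 * x * z^3 + 2 * x * z^4 + 2 * x * y - 4 * x * y * z - 23 * x * y * z^2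
      - 20 * x * y * z^3 + 5 * x * y^2 + 6 * x * y^2 * z - 6 * x * y^2 * z^2 + 5 * x * y^3
      + 10 * x * y^3 * z + x^2 + 3 * x^2 * z - x^2 * z^2 - 4 * x^2 * z^3 + 4 * x^2 * y
      + 13 * x^2 * y * z + 10 * x^2 * y * z^2 + 3 * x^2 * y^2 + 6 * x^2 * y^2 * z + x^3
      + 2 * x^3 * z + 2 * x^3 * z^2 - w * z + 2 * w * z^3 + 2 * w * z^4 + 2 * w * y
      - 3 * w * y * z - 6 * w * y * z^2 + w * y^2 - 5 * w * y^2 * z - 10 * w * y^2 * z^2
      + 3 * w * y^3 + 2 * w * y^4 + w * x - w * x * z - 5 * w * x * z^2 - 4 * w * x * z^3
      + 4 * w * x * y + 4 * w * x * y * z - 4 * w * x * y * z^2 + 6 * w * x * y^2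
      + 10 * w * x * y^2 * z + 2 * w * x * y^3 + w * x^2 + 3 * w * x^2 * z + 2 * w * x^2 * z^2
      + 2 * w * x^2 * y + 4 * w * x^2 * y * z"])
    (use rel in \<open>unfold A2_def B3_def of_int_numeral, algebra\<close>,
      intro int_coeffs_intros ints)

lemma int_coeffs_squares:
  shows "int_coeffs S2" "int_coeffs S4" "int_coeffs S8" "int_coeffs Sodd"
  by (simp_all add: S2_def S4_def S8_def S_def Sodd_def squares_gf_def int_coeffs_weight_gf
      int_coeffs_compose_X2)

lemma phi_neg_product_nth_0: "((phi_neg * (phi_neg oo fps_X ^ 2)) ^ 3) $ 0 = 1"
proof -
  have "phi_neg $ 0 = 1"
    by (simp add: phi_neg_def squares_gf_nth_0)
  then show ?thesis
    by (simp add: fps_nth_power_0)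
qed

lemma int_coeffs_btbar_gf: "int_coeffs btbar_gf"
proof -
  have "int_coeffs ((phi_neg * (phi_neg oo fps_X ^ 2)) ^ 3)"
    unfolding phi_neg_compose_X2 unfolding phi_neg_eq by (intro int_coeffs_intros int_coeffs_squares)
  then show ?thesis
    unfolding btbar_gf_eq using phi_neg_product_nth_0 by (rule int_coeffs_inverse)
qed

lemma btbar_gf_cong_A0: "fps_cong 64 btbar_gf (A0 S2 S4 S8 + Sodd * B0 S2 S4 S8)"
proof -
  define u where "u = (1 + 2 * (S4 - Sodd)) * (1 + 2 * (2 * S8 - S2))"
  define v where "v = inv_cube_mod64 (S4 - Sodd) * inv_cube_mod64 (2 * S8 - S2)"
  have ints: "int_coeffs (S4 - Sodd)" "int_coeffs (2 * S8 - S2)"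
    by (intro int_coeffs_intros int_coeffs_squares)+
  have "u = phi_neg * (phi_neg oo fps_X ^ 2)"
    unfolding phi_neg_compose_X2 unfolding phi_neg_eq u_def by (simp add: algebra_simps)
  then have "btbar_gf * u ^ 3 = 1"
    unfolding btbar_gf_eq using phi_neg_product_nth_0 by (simp add: inverse_mult_eq_1)
  moreover have "fps_cong 64 (u ^ 3 * v) 1"
  proof -
    have "u ^ 3 * v = ((1 + 2 * (S4 - Sodd)) ^ 3 * inv_cube_mod64 (S4 - Sodd))
        * ((1 + 2 * (2 * S8 - S2)) ^ 3 * inv_cube_mod64 (2 * S8 - S2))"
      by (simp add: u_def v_def power_mult_distrib ac_simps)
    moreover have "int_coeffs ((1 + 2 * (S4 - Sodd)) ^ 3 * inv_cube_mod64 (S4 - Sodd))"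
      unfolding inv_cube_mod64_def by (intro int_coeffs_intros int_coeffs_squares)
    then have "fps_cong 64 (((1 + 2 * (S4 - Sodd)) ^ 3 * inv_cube_mod64 (S4 - Sodd))
        * ((1 + 2 * (2 * S8 - S2)) ^ 3 * inv_cube_mod64 (2 * S8 - S2))) (1 * 1)"
      by (rule fps_cong_mult[OF inv_cube_mod64_cong[OF ints(1)] inv_cube_mod64_cong[OF ints(2)] _ int_coeffs_1])
    ultimately show ?thesis
      by simp
  qed
  ultimately have "fps_cong 64 btbar_gf v"
    using int_coeffs_btbar_gf by (rule fps_cong_inverse)
  moreover have "fps_cong 64 v (A0 S2 S4 S8 + Sodd * B0 S2 S4 S8)"
    unfolding v_def by (rule inv_cube_mod64_dissection[OF int_coeffs_squares Sodd_square])
  ultimately show ?thesis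
    by (rule fps_cong_trans)
qed

lemma U2_dissection_step:
  assumes f: "fps_cong 64 f (P S2 S4 S8 + Sodd * Q S2 S4 S8)"
    and P: "\<And>x y z. P x y z oo fps_X ^ 2 = P (x oo fps_X ^ 2) (y oo fps_X ^ 2) (z oo fps_X ^ 2)"
    and Q: "\<And>x y z. Q x y z oo fps_X ^ 2 = Q (x oo fps_X ^ 2) (y oo fps_X ^ 2) (z oo fps_X ^ 2)"
    and step: "fps_cong 64 (P (S4 + Sodd) S2 S4) (P' S2 S4 S8 + Sodd * Q' S2 S4 S8)"
  shows "fps_cong 64 (U2 f) (P' S2 S4 S8 + Sodd * Q' S2 S4 S8)"
proof -
  have "P S2 S4 S8 + Sodd * Q S2 S4 S8 = (P S S2 S4 oo fps_X ^ 2) + (Q S S2 S4 oo fps_X ^ 2) * Sodd"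
    by (simp add: P Q S2_def S4_def S8_def mult.commute)
  then have "U2 (P S2 S4 S8 + Sodd * Q S2 S4 S8) = P (S4 + Sodd) S2 S4"
    by (simp add: U2_add U2_compose_X2 U2_compose_X2_mult U2_Sodd flip: S_eq)
  then have "fps_cong 64 (U2 f) (P (S4 + Sodd) S2 S4)"
    using fps_cong_U2[OF f] by simp
  then show ?thesis
    using step by (rule fps_cong_trans)
qed

lemma btbar_gf_U2_cong: "fps_cong 64 (U2 (U2 (U2 (U2 btbar_gf)))) (U2 (U2 (U2 btbar_gf)))"
proof -
  note ints = int_coeffs_squares and rel = Sodd_square
  note compose = dissection_polys_compose_X2
  have "fps_cong 64 (U2 btbar_gf) (A1 S2 S4 S8 + Sodd * B1 S2 S4 S8)"
    by (rule U2_dissection_step[where P = A0 and Q = B0 and P' = A1 and Q' = B1,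
        OF btbar_gf_cong_A0 compose(1,2) A0_dissection[OF ints rel]])
  then have "fps_cong 64 (U2 (U2 btbar_gf)) (A2 S2 S4 S8 + Sodd * B2 S2 S4 S8)"
    by (rule U2_dissection_step[where P = A1 and Q = B1 and P' = A2 and Q' = B2,
        OF _ compose(3,4) A1_dissection[OF ints rel]])
  then have three: "fps_cong 64 (U2 (U2 (U2 btbar_gf))) (A2 S2 S4 S8 + Sodd * B3 S2 S4 S8)"
    by (rule U2_dissection_step[where P = A2 and Q = B2 and P' = A2 and Q' = B3,
        OF _ compose(5,6) A2_dissection[OF ints rel]])
  then have "fps_cong 64 (U2 (U2 (U2 (U2 btbar_gf)))) (A2 S2 S4 S8 + Sodd * B3 S2 S4 S8)"
    by (rule U2_dissection_step[where P = A2 and Q = B3 and P' = A2 and Q' = B3,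
        OF _ compose(5,7) A2_dissection[OF ints rel]])
  then show ?thesis
    using fps_cong_sym[OF three] by (rule fps_cong_trans)
qed

lemma btbar_16n_cong_8n: "\<exists>k::int. btbar (16 * n) - btbar (8 * n) = of_int (64 * k)"
  using fps_cong_nth[OF btbar_gf_U2_cong, of n] by (simp add: btbar_def)

lemma btbar_2pow_cong_8n: "\<exists>k::int. btbar (2 ^ (a + 3) * n) - btbar (8 * n) = of_int (64 * k)"
proof (induction a)
  case 0
  show ?case
    by (intro exI[of _ 0]) simp
next
  case (Suc a)
  then obtain k where k: "btbar (2 ^ (a + 3) * n) - btbar (8 * n) = of_int (64 * k)"
    by blast
  obtain k' where k': "btbar (16 * (2 ^ a * n)) - btbar (8 * (2 ^ a * n)) = of_int (64 * k')"
    using btbar_16n_cong_8n by blast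
  have "btbar (2 ^ (Suc a + 3) * n) - btbar (8 * n) = of_int (64 * (k + k'))"
    using k k' by (simp add: power_add algebra_simps)
  then show ?case
    by blast
qed

theorem mainTheorem6:
  shows "(\<forall>n::nat. \<exists>k::int. btbar (16 * n) - btbar (8 * n) = of_int (64 * k))
       \<and> (\<forall>n alpha::nat. \<exists>k::int. btbar (2 ^ (alpha + 3) * n) - btbar (8 * n) = of_int (64 * k))"
  using btbar_16n_cong_8n btbar_2pow_cong_8n by blast

end
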